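(* Let $n\ge 2$ be a fixed real number, $\nu\ge 0$, and $T>0$. Let $u_1,\omega_1,\psi_1:[0,T)\times[0,\infty)\times\mathbb{R}\to\mathbb{R}$ be smooth functions which, for each $t$, are even in $r$ (i.e. extend to smooth functions of $(r,z)\in\mathbb{R}^2$ that are even in $r$) and which, together with all their derivatives, decay rapidly as $r^2+z^2\to\infty$, uniformly on compact time subintervals. Suppose they satisfy, on $(0,T)\times(0,\infty)\times\mathbb{R}$, $$u_{1,t}+u^r u_{1,r}+u^z u_{1,z}=2u_1\psi_{1,z}+\nu\,\Delta_n u_1,$$ $$\omega_{1,t}+u^r\omega_{1,r}+u^z\omega_{1,z}=(u_1^2)_z-(n-3)\psi_{1,z}\omega_1+\nu\,\Delta_n\omega_1,$$ $$-\Delta_n\psi_1=\omega_1,$$ where $\Delta_n=\partial_r^2+\frac{n}{r}\partial_r+\partial_z^2$, $u^r=-r\psi_{1,z}$ and $u^z=(n-1)\psi_1+r\psi_{1,r}$. Then for all $t\in(0,T)$, $$\frac12\frac{d}{dt}\int_{\mathbb{R}}\int_0^\infty\big(u_1^2+\psi_{1,r}^2+\psi_{1,z}^2\big)\,r^n\,dr\,dz=-\nu\int_{\mathbb{R}}\int_0^\infty\big(u_{1,r}^2+u_{1,z}^2+(\Delta_n\psi_1)^2\big)\,r^n\,dr\,dz .$$ In particular, for $\nu=0$ the quantity $\int\!\!\int(u_1^2+|\nabla\psi_1|^2)r^n\,dr\,dz$ is conserved, and for $\nu>0$ it is non-increasing.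
   Context: This is the "generalized $n$-dimensional axisymmetric Navier--Stokes equations" written in the variables $u_1=u^\theta/r$, $\omega_1=\omega^\theta/r$, $\psi_1=\psi^\theta/r$ (angular velocity, angular vorticity, angular stream function divided by $r$). Equivalently the first equation can be written for the total circulation $\Gamma=r^2u_1$ as $\Gamma_t+u^r\Gamma_r+u^z\Gamma_z=\nu(\Gamma_{rr}+\frac{n-4}{r}\Gamma_r+\frac{6-2n}{r^2}\Gamma+\Gamma_{zz})$. The velocity satisfies $u^r=-(r^{n-1}\psi_1)_z/r^{n-2}$, $u^z=(r^{n-1}\psi_1)_r/r^{n-2}$. Here $\nabla=(\partial_r,\partial_z)$. *)

theory Defs
  imports "HOL-Analysis.Analysis"
begin

fun dirs :: "'a::real_normed_vector list \<Rightarrow> ('a \<Rightarrow> real) \<Rightarrow> 'a \<Rightarrow> real" where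
  "dirs [] f = f"
| "dirs (b # bs) f = (\<lambda>x. frechet_derivative (dirs bs f) (at x) b)"

definition smooth_on :: "'a::euclidean_space set \<Rightarrow> ('a \<Rightarrow> real) \<Rightarrow> bool" where
  "smooth_on S f \<longleftrightarrow> (\<forall>bs. set bs \<subseteq> Basis \<longrightarrow> dirs bs f differentiable_on S)"

definition unc :: "(real \<Rightarrow> real \<Rightarrow> real \<Rightarrow> real) \<Rightarrow> real \<times> real \<times> real \<Rightarrow> real" where
  "unc f = (\<lambda>(t, r, z). f t r z)"

definition rapid_decay :: "real set \<Rightarrow> (real \<Rightarrow> real \<Rightarrow> real \<Rightarrow> real) \<Rightarrow> bool" where
  "rapid_decay I f \<longleftrightarrow>
     (\<forall>bs K (N::nat). set bs \<subseteq> Basis \<longrightarrow> compact K \<longrightarrow> K \<subseteq> I \<longrightarrow>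
        (\<exists>C. \<forall>t\<in>K. \<forall>r z. \<bar>dirs bs (unc f) (t, r, z)\<bar> * (1 + r\<^sup>2 + z\<^sup>2) ^ N \<le> C))"

definition dt :: "(real \<Rightarrow> real \<Rightarrow> real \<Rightarrow> real) \<Rightarrow> real \<Rightarrow> real \<Rightarrow> real \<Rightarrow> real" where
  "dt f t r z = deriv (\<lambda>s. f s r z) t"
definition dr :: "(real \<Rightarrow> real \<Rightarrow> real \<Rightarrow> real) \<Rightarrow> real \<Rightarrow> real \<Rightarrow> real \<Rightarrow> real" where
  "dr f t r z = deriv (\<lambda>s. f t s z) r"
definition dz :: "(real \<Rightarrow> real \<Rightarrow> real \<Rightarrow> real) \<Rightarrow> real \<Rightarrow> real \<Rightarrow> real \<Rightarrow> real" where
  "dz f t r z = deriv (\<lambda>s. f t r s) z"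

definition lapn :: "real \<Rightarrow> (real \<Rightarrow> real \<Rightarrow> real \<Rightarrow> real) \<Rightarrow> real \<Rightarrow> real \<Rightarrow> real \<Rightarrow> real" where
  "lapn n f t r z = dr (dr f) t r z + n / r * dr f t r z + dz (dz f) t r z"

definition wint :: "real \<Rightarrow> (real \<Rightarrow> real \<Rightarrow> real) \<Rightarrow> real" where
  "wint n g = (LINT z|lborel. (LINT r:{0<..}|lborel. g r z * r powr n))"

end

theory Submission
  imports Defs "HOL-Probability.Sinc_Integral"
begin

text \<open>
  Let \<open>E(t) = \<integral>\<integral> (u\<^sub>1\<^sup>2 + |\<nabla>\<psi>\<^sub>1|\<^sup>2) r\<^sup>n dr dz\<close>. Differentiate under the integral sign and
  eliminate the time derivatives of \<open>u\<^sub>1\<close> and of \<open>\<omega>\<^sub>1 = -\<Delta>\<^sub>n \<psi>\<^sub>1\<close> using the equations: pointwise, the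
  integrand of \<open>E'/2\<close> equals \<open>-\<nu> (|\<nabla>u\<^sub>1|\<^sup>2 + \<omega>\<^sub>1\<^sup>2) r\<^sup>n + \<partial>\<^sub>r(r\<^sup>n Q) + \<partial>\<^sub>z(r\<^sup>n R)\<close> for explicit
  polynomials \<open>Q\<close>, \<open>R\<close> in \<open>r\<close>, \<open>u\<^sub>1\<close>, \<open>\<omega>\<^sub>1\<close>, \<open>\<psi>\<^sub>1\<close> and their derivatives. The flux \<open>r\<^sup>n Q\<close> vanishes at
  the axis since \<open>Q\<close> is continuous up to \<open>r = 0\<close> and \<open>n > 0\<close>; both fluxes vanish at infinity by
  rapid decay, so the divergence terms integrate to zero. Rapid decay of all derivatives, uniformly on
  compact time intervals, bounds every integrand by a multiple of \<open>1/((1 + r\<^sup>2)(1 + z\<^sup>2))\<close>, which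
  justifies the differentiation under the integral sign.
\<close>

section \<open>Differentiation and continuity under the integral sign\<close>

lemma tendsto_integral_at:
  fixes f :: "real \<Rightarrow> 'a \<Rightarrow> real"
  assumes d: "d > 0"
    and meas: "\<And>s. s \<in> ball z d \<Longrightarrow> f s \<in> borel_measurable M"
    and lim: "\<And>x. x \<in> space M \<Longrightarrow> ((\<lambda>s. f s x) \<longlongrightarrow> l x) (at z)"
    and g: "integrable M g"
    and bound: "\<And>x s. x \<in> space M \<Longrightarrow> s \<in> ball z d \<Longrightarrow> s \<noteq> z \<Longrightarrow> \<bar>f s x\<bar> \<le> g x"
  shows "((\<lambda>s. \<integral>x. f s x \<partial>M) \<longlongrightarrow> (\<integral>x. l x \<partial>M)) (at z)"
  unfolding tendsto_at_iff_sequentially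
proof (intro allI impI)
  fix X :: "nat \<Rightarrow> real"
  assume X: "\<forall>i. X i \<in> UNIV - {z}" "X \<longlonglongrightarrow> z"
  have "\<forall>\<^sub>F i in sequentially. X i \<in> ball z d"
    using X(2) d by (intro topological_tendstoD[OF _ open_ball]) auto
  then obtain N where N: "\<And>i. N \<le> i \<Longrightarrow> X i \<in> ball z d"
    by (auto simp: eventually_sequentially)
  define Y where "Y = (\<lambda>i. X (i + N))"
  have Y: "\<forall>i. Y i \<in> UNIV - {z}" "Y \<longlonglongrightarrow> z" "\<And>i. Y i \<in> ball z d"
    using X N LIMSEQ_ignore_initial_segment[OF X(2), of N] by (auto simp: Y_def)
  have lim_Y: "(\<lambda>i. f (Y i) x) \<longlonglongrightarrow> l x" if "x \<in> space M" for x
    using lim[OF that] Y(1,2) unfolding tendsto_at_iff_sequentially comp_def by blast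
  have "(\<lambda>i. \<integral>x. f (Y i) x \<partial>M) \<longlonglongrightarrow> (\<integral>x. l x \<partial>M)"
  proof (rule integral_dominated_convergence[OF _ _ g])
    show "l \<in> borel_measurable M"
      using lim_Y meas[OF Y(3)] by (rule borel_measurable_LIMSEQ_real)
    show "(\<lambda>x. f (Y i) x) \<in> borel_measurable M" for i
      using meas[OF Y(3)] by simp
    show "AE x in M. (\<lambda>i. f (Y i) x) \<longlonglongrightarrow> l x"
      using lim_Y by (rule AE_I2)
    show "AE x in M. norm (f (Y i) x) \<le> g x" for i
      using bound Y(1,3) by (intro AE_I2) auto
  qed
  then show "((\<lambda>s. \<integral>x. f s x \<partial>M) \<circ> X) \<longlonglongrightarrow> (\<integral>x. l x \<partial>M)"
    unfolding Y_def comp_def by (rule LIMSEQ_offset)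
qed

lemma isCont_integral:
  fixes f :: "real \<Rightarrow> 'a \<Rightarrow> real"
  assumes "d > 0"
    and "\<And>s. s \<in> ball z d \<Longrightarrow> f s \<in> borel_measurable M"
    and "\<And>x. x \<in> space M \<Longrightarrow> isCont (\<lambda>s. f s x) z"
    and "integrable M g"
    and "\<And>x s. x \<in> space M \<Longrightarrow> s \<in> ball z d \<Longrightarrow> \<bar>f s x\<bar> \<le> g x"
  shows "isCont (\<lambda>s. \<integral>x. f s x \<partial>M) z"
  unfolding isCont_def by (rule tendsto_integral_at) (use assms in \<open>auto simp: isCont_def\<close>)

lemma has_real_derivative_integral:
  fixes f f' :: "real \<Rightarrow> 'a \<Rightarrow> real"
  assumes d: "d > 0"
    and int: "\<And>s. s \<in> ball t d \<Longrightarrow> integrable M (f s)"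
    and der: "\<And>x s. x \<in> space M \<Longrightarrow> s \<in> ball t d \<Longrightarrow> ((\<lambda>s. f s x) has_real_derivative f' s x) (at s)"
    and g: "integrable M g"
    and bound: "\<And>x s. x \<in> space M \<Longrightarrow> s \<in> ball t d \<Longrightarrow> \<bar>f' s x\<bar> \<le> g x"
  shows "((\<lambda>s. \<integral>x. f s x \<partial>M) has_real_derivative (\<integral>x. f' t x \<partial>M)) (at t)"
proof -
  have t: "t \<in> ball t d" using d by simp
  define q where "q s x = (f s x - f t x) / (s - t)" for s x
  have "((\<lambda>s. \<integral>x. q s x \<partial>M) \<longlongrightarrow> (\<integral>x. f' t x \<partial>M)) (at t)"
  proof (rule tendsto_integral_at[OF d _ _ g])
    show "q s \<in> borel_measurable M" if "s \<in> ball t d" for s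
      using int[OF that] int[OF t] unfolding q_def[abs_def] by measurable
    show "((\<lambda>s. q s x) \<longlongrightarrow> f' t x) (at t)" if "x \<in> space M" for x
      using der[OF that t] by (simp add: q_def has_field_derivative_iff)
    show "\<bar>q s x\<bar> \<le> g x" if x: "x \<in> space M" and s: "s \<in> ball t d" "s \<noteq> t" for x s
    proof -
      have "\<bar>f s x - f t x\<bar> \<le> g x * \<bar>s - t\<bar>"
        using field_differentiable_bound[of "ball t d" "\<lambda>s. f s x" "\<lambda>s. f' s x" "g x" s t]
          der[OF x] bound[OF x] s t by (auto intro: has_field_derivative_at_within)
      then show ?thesis using s by (simp add: q_def divide_le_eq)
    qed
  qed
  moreover have "(\<integral>x. q s x \<partial>M) = ((\<integral>x. f s x \<partial>M) - (\<integral>x. f t x \<partial>M)) / (s - t)"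
    if "s \<in> ball t d" for s
    using int[OF that] int[OF t] by (simp add: q_def integral_diff)
  ultimately show ?thesis
    unfolding has_field_derivative_iff
    by (rule Lim_transform_within_open[OF _ open_ball t]) simp
qed

section \<open>Symmetry of mixed directional derivatives\<close>

lemma dirs_append: "dirs bs (dirs cs f) = dirs (bs @ cs) f"
  by (induction bs) auto

declare dirs.simps(2) [simp del]

lemma DERIV_along_line:
  fixes g :: "'v::real_normed_vector \<Rightarrow> real"
  assumes "g differentiable (at (p + s *\<^sub>R a))"
  shows "((\<lambda>s. g (p + s *\<^sub>R a)) has_real_derivative dirs [a] g (p + s *\<^sub>R a)) (at s)"
proof -
  let ?D = "frechet_derivative g (at (p + s *\<^sub>R a))"
  have g: "(g has_derivative ?D) (at (p + s *\<^sub>R a))"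
    using assms frechet_derivative_works by blast
  have line: "((\<lambda>s. p + s *\<^sub>R a) has_derivative (\<lambda>h. h *\<^sub>R a)) (at s)"
    by (auto intro!: derivative_eq_intros)
  have "((\<lambda>s. g (p + s *\<^sub>R a)) has_derivative (\<lambda>h. ?D (h *\<^sub>R a))) (at s)"
    using has_derivative_compose[OF line g] by (simp add: o_def)
  then show ?thesis
    by (rule has_derivative_imp_has_field_derivative)
       (simp add: dirs.simps(2) linear_scale[OF has_derivative_linear[OF g]])
qed

text \<open>Two applications of the mean value theorem to the second difference of \<open>g\<close> on the
  parallelogram spanned by \<open>h a\<close> and \<open>h b\<close>.\<close>

lemma second_difference_mixed_derivative:
  fixes g :: "'v::real_normed_vector \<Rightarrow> real"
  assumes h: "h > 0"
    and dg: "\<And>s u. 0 \<le> s \<Longrightarrow> s \<le> h \<Longrightarrow> 0 \<le> u \<Longrightarrow> u \<le> h \<Longrightarrow>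
      g differentiable (at (x + s *\<^sub>R a + u *\<^sub>R b))"
    and dga: "\<And>s u. 0 \<le> s \<Longrightarrow> s \<le> h \<Longrightarrow> 0 \<le> u \<Longrightarrow> u \<le> h \<Longrightarrow>
      dirs [a] g differentiable (at (x + s *\<^sub>R a + u *\<^sub>R b))"
  shows "\<exists>s u. 0 < s \<and> s < h \<and> 0 < u \<and> u < h \<and>
    g (x + h *\<^sub>R a + h *\<^sub>R b) - g (x + h *\<^sub>R a) - g (x + h *\<^sub>R b) + g x
      = h * h * dirs [b, a] g (x + s *\<^sub>R a + u *\<^sub>R b)"
proof -
  define \<alpha> where "\<alpha> s = g (x + h *\<^sub>R b + s *\<^sub>R a) - g (x + s *\<^sub>R a)" for s
  have "(\<alpha> has_real_derivative dirs [a] g (x + h *\<^sub>R b + s *\<^sub>R a) - dirs [a] g (x + s *\<^sub>R a)) (at s)"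
    if "0 \<le> s" "s \<le> h" for s
    unfolding \<alpha>_def using dg[of s h] dg[of s 0] that h
    by (intro DERIV_diff DERIV_along_line) (auto simp: algebra_simps)
  then obtain s where s: "0 < s" "s < h"
    "\<alpha> h - \<alpha> 0 = h * (dirs [a] g (x + h *\<^sub>R b + s *\<^sub>R a) - dirs [a] g (x + s *\<^sub>R a))"
    using MVT2[OF h, of \<alpha> "\<lambda>s. dirs [a] g (x + h *\<^sub>R b + s *\<^sub>R a) - dirs [a] g (x + s *\<^sub>R a)"]
    by auto
  define \<beta> where "\<beta> u = dirs [a] g (x + s *\<^sub>R a + u *\<^sub>R b)" for u
  have "(\<beta> has_real_derivative dirs [b, a] g (x + s *\<^sub>R a + u *\<^sub>R b)) (at u)"
    if "0 \<le> u" "u \<le> h" for u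
    unfolding \<beta>_def using DERIV_along_line[OF dga[of s u]] that s by (simp add: dirs_append)
  then obtain u where u: "0 < u" "u < h"
    "\<beta> h - \<beta> 0 = h * dirs [b, a] g (x + s *\<^sub>R a + u *\<^sub>R b)"
    using MVT2[OF h, of \<beta> "\<lambda>u. dirs [b, a] g (x + s *\<^sub>R a + u *\<^sub>R b)"] by auto
  have "g (x + h *\<^sub>R a + h *\<^sub>R b) - g (x + h *\<^sub>R a) - g (x + h *\<^sub>R b) + g x = \<alpha> h - \<alpha> 0"
    by (simp add: \<alpha>_def algebra_simps)
  also have "\<dots> = h * (\<beta> h - \<beta> 0)"
    using s(3) by (simp add: \<beta>_def algebra_simps)
  finally show ?thesis using s u by auto
qed

lemma norm_parallelogram_point:
  fixes a b :: "'v::real_normed_vector"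
  assumes "0 \<le> s" "s \<le> h" "0 \<le> u" "u \<le> h"
  shows "norm (s *\<^sub>R a + u *\<^sub>R b) \<le> h * (norm a + norm b)"
proof -
  have "norm (s *\<^sub>R a + u *\<^sub>R b) \<le> s * norm a + u * norm b"
    using assms by (metis abs_of_nonneg norm_scaleR norm_triangle_ineq)
  also have "\<dots> \<le> h * (norm a + norm b)"
    using assms by (simp add: distrib_left add_mono mult_right_mono)
  finally show ?thesis .
qed

lemma mixed_derivatives_meet_nearby:
  fixes g :: "'v::real_normed_vector \<Rightarrow> real"
  assumes h: "h > 0"
    and dg: "\<And>s u. 0 \<le> s \<Longrightarrow> s \<le> h \<Longrightarrow> 0 \<le> u \<Longrightarrow> u \<le> h \<Longrightarrow>
      g differentiable (at (x + s *\<^sub>R a + u *\<^sub>R b))"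
    and dga: "\<And>s u. 0 \<le> s \<Longrightarrow> s \<le> h \<Longrightarrow> 0 \<le> u \<Longrightarrow> u \<le> h \<Longrightarrow>
      dirs [a] g differentiable (at (x + s *\<^sub>R a + u *\<^sub>R b))"
    and dgb: "\<And>s u. 0 \<le> s \<Longrightarrow> s \<le> h \<Longrightarrow> 0 \<le> u \<Longrightarrow> u \<le> h \<Longrightarrow>
      dirs [b] g differentiable (at (x + s *\<^sub>R a + u *\<^sub>R b))"
  shows "\<exists>p q. norm (p - x) \<le> h * (norm a + norm b) \<and> norm (q - x) \<le> h * (norm a + norm b)
    \<and> dirs [b, a] g p = dirs [a, b] g q"
proof -
  let ?\<Delta> = "g (x + h *\<^sub>R a + h *\<^sub>R b) - g (x + h *\<^sub>R a) - g (x + h *\<^sub>R b) + g x"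
  have swap: "x + u *\<^sub>R b + s *\<^sub>R a = x + s *\<^sub>R a + u *\<^sub>R b" for s u
    by (simp add: algebra_simps)
  have "\<exists>s u. 0 < s \<and> s < h \<and> 0 < u \<and> u < h \<and>
      ?\<Delta> = h * h * dirs [b, a] g (x + s *\<^sub>R a + u *\<^sub>R b)"
    using h by (rule second_difference_mixed_derivative) (simp_all add: dg dga)
  then obtain s u where su: "0 < s" "s < h" "0 < u" "u < h"
    "?\<Delta> = h * h * dirs [b, a] g (x + s *\<^sub>R a + u *\<^sub>R b)"
    by blast
  have "\<exists>s u. 0 < s \<and> s < h \<and> 0 < u \<and> u < h \<and>
      g (x + h *\<^sub>R b + h *\<^sub>R a) - g (x + h *\<^sub>R b) - g (x + h *\<^sub>R a) + g x
        = h * h * dirs [a, b] g (x + s *\<^sub>R b + u *\<^sub>R a)"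
    using h by (rule second_difference_mixed_derivative) (simp_all add: dg dgb swap)
  then obtain s' u' where su': "0 < s'" "s' < h" "0 < u'" "u' < h"
    "?\<Delta> = h * h * dirs [a, b] g (x + s' *\<^sub>R b + u' *\<^sub>R a)"
    by (auto simp: algebra_simps)
  have "dirs [b, a] g (x + s *\<^sub>R a + u *\<^sub>R b) = dirs [a, b] g (x + s' *\<^sub>R b + u' *\<^sub>R a)"
    using su(5) su'(5) h by simp
  moreover have "norm (x + s *\<^sub>R a + u *\<^sub>R b - x) \<le> h * (norm a + norm b)"
    using norm_parallelogram_point[of s h u a b] su by (simp add: add.assoc)
  moreover have "norm (x + s' *\<^sub>R b + u' *\<^sub>R a - x) \<le> h * (norm a + norm b)"
    using norm_parallelogram_point[of u' h s' a b] su' by (simp add: add.assoc add.commute)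
  ultimately show ?thesis by blast
qed

text \<open>Schwarz's theorem: both mixed derivatives are limits of the same second difference quotients.\<close>

lemma dirs_commute:
  fixes g :: "'v::real_normed_vector \<Rightarrow> real"
  assumes S: "open S" "x \<in> S"
    and dg: "\<And>y. y \<in> S \<Longrightarrow> g differentiable (at y)"
    and dga: "\<And>y. y \<in> S \<Longrightarrow> dirs [a] g differentiable (at y)"
    and dgb: "\<And>y. y \<in> S \<Longrightarrow> dirs [b] g differentiable (at y)"
    and cont: "isCont (dirs [b, a] g) x" "isCont (dirs [a, b] g) x"
  shows "dirs [a, b] g x = dirs [b, a] g x"
proof -
  obtain d where d: "d > 0" "ball x d \<subseteq> S"
    using S open_contains_ball by blast
  define c where "c = d / (norm a + norm b + 1)"
  define h where "h k = c * inverse (real (Suc k))" for k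
  have "0 < norm a + norm b + 1"
    by (simp add: add_nonneg_pos)
  then have c: "0 < c" "c * (norm a + norm b) < d"
    using d by (auto simp: c_def field_simps)
  have h: "0 < h k" "h k * (norm a + norm b) < d" for k
  proof -
    show "0 < h k" using c by (simp add: h_def)
    have "h k \<le> c" using c by (simp add: h_def field_simps)
    then have "h k * (norm a + norm b) \<le> c * (norm a + norm b)" by (simp add: mult_right_mono)
    then show "h k * (norm a + norm b) < d" using c by linarith
  qed
  have in_S: "x + s *\<^sub>R a + u *\<^sub>R b \<in> S" if "0 \<le> s" "s \<le> h k" "0 \<le> u" "u \<le> h k" for s u k
  proof -
    have "dist (x + s *\<^sub>R a + u *\<^sub>R b) x < d"
      using norm_parallelogram_point[OF that, of a b] h(2)[of k] by (simp add: dist_norm add.assoc)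
    then show ?thesis using d by (auto simp: dist_commute)
  qed
  have "\<forall>k. \<exists>p q. norm (p - x) \<le> h k * (norm a + norm b) \<and> norm (q - x) \<le> h k * (norm a + norm b)
      \<and> dirs [b, a] g p = dirs [a, b] g q"
    using h(1) by (intro allI mixed_derivatives_meet_nearby) (simp_all add: dg dga dgb in_S)
  from choice[OF this] obtain p where "\<forall>k. \<exists>q. norm (p k - x) \<le> h k * (norm a + norm b)
      \<and> norm (q - x) \<le> h k * (norm a + norm b) \<and> dirs [b, a] g (p k) = dirs [a, b] g q"
    by blast
  from choice[OF this] obtain q where pq: "\<And>k. norm (p k - x) \<le> h k * (norm a + norm b)"
    "\<And>k. norm (q k - x) \<le> h k * (norm a + norm b)" "\<And>k. dirs [b, a] g (p k) = dirs [a, b] g (q k)"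
    by blast
  have h0: "(\<lambda>k. h k * (norm a + norm b)) \<longlonglongrightarrow> 0"
    unfolding h_def by (intro tendsto_mult_left_zero tendsto_mult_right_zero LIMSEQ_inverse_real_of_nat)
  have "(\<lambda>k. p k - x) \<longlonglongrightarrow> 0" "(\<lambda>k. q k - x) \<longlonglongrightarrow> 0"
    using pq(1,2) by (auto intro!: Lim_null_comparison[OF always_eventually h0])
  then have p: "p \<longlonglongrightarrow> x" and q: "q \<longlonglongrightarrow> x"
    by (auto intro: LIM_zero_cancel)
  have "(\<lambda>k. dirs [b, a] g (p k)) \<longlonglongrightarrow> dirs [a, b] g x"
    unfolding pq(3) using cont(2) q by (rule isCont_tendsto_compose)
  moreover have "(\<lambda>k. dirs [b, a] g (p k)) \<longlonglongrightarrow> dirs [b, a] g x"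
    using cont(1) p by (rule isCont_tendsto_compose)
  ultimately show ?thesis by (rule LIMSEQ_unique)
qed

section \<open>Partial derivatives of smooth functions of \<open>(t, r, z)\<close>\<close>

definition et :: "real \<times> real \<times> real" where "et = (1, 0, 0)"
definition er :: "real \<times> real \<times> real" where "er = (0, 1, 0)"
definition ez :: "real \<times> real \<times> real" where "ez = (0, 0, 1)"

lemma coordinate_vectors_Basis: "et \<in> Basis" "er \<in> Basis" "ez \<in> Basis"
  by (auto simp: et_def er_def ez_def Basis_prod_def zero_prod_def)

lemma smooth_on_dirs_differentiable:
  assumes "smooth_on S F" "open S" "set bs \<subseteq> Basis" "y \<in> S"
  shows "dirs bs F differentiable (at y)"
  using assms unfolding smooth_on_def by (auto simp: differentiable_on_eq_differentiable_at)

lemma smooth_on_dirs_continuous_on: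
  assumes "smooth_on S F" "set bs \<subseteq> Basis"
  shows "continuous_on S (dirs bs F)"
  using assms unfolding smooth_on_def by (blast intro: differentiable_imp_continuous_on)

lemma smooth_on_dirs_isCont:
  assumes "smooth_on S F" "open S" "set bs \<subseteq> Basis" "y \<in> S"
  shows "isCont (dirs bs F) y"
  using smooth_on_dirs_differentiable[OF assms] differentiable_imp_continuous_within by blast

lemma smooth_on_dirs_commute:
  assumes F: "smooth_on S F" "open S" and ab: "a \<in> Basis" "b \<in> Basis" and cs: "set cs \<subseteq> Basis"
    and x: "x \<in> S"
  shows "dirs (a # b # cs) F x = dirs (b # a # cs) F x"
proof -
  have "dirs [a, b] (dirs cs F) x = dirs [b, a] (dirs cs F) x"
    using F(2) x
  proof (rule dirs_commute)
    show "dirs cs F differentiable (at y)" "dirs [a] (dirs cs F) differentiable (at y)"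
      "dirs [b] (dirs cs F) differentiable (at y)" if "y \<in> S" for y
      using smooth_on_dirs_differentiable[OF F _ that] ab cs by (simp_all add: dirs_append)
    show "isCont (dirs [b, a] (dirs cs F)) x" "isCont (dirs [a, b] (dirs cs F)) x"
      using smooth_on_dirs_isCont[OF F _ x] ab cs by (simp_all add: dirs_append)
  qed
  then show ?thesis by (simp add: dirs_append)
qed

lemma DERIV_dirs_t:
  assumes "smooth_on S F" "open S" "set bs \<subseteq> Basis" "(t, r, z) \<in> S"
  shows "((\<lambda>s. dirs bs F (s, r, z)) has_real_derivative dirs (et # bs) F (t, r, z)) (at t)"
  using DERIV_along_line[of "dirs bs F" "(0, r, z)" t et] smooth_on_dirs_differentiable[OF assms]
  by (simp add: et_def dirs_append)

lemma DERIV_dirs_r: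
  assumes "smooth_on S F" "open S" "set bs \<subseteq> Basis" "(t, r, z) \<in> S"
  shows "((\<lambda>s. dirs bs F (t, s, z)) has_real_derivative dirs (er # bs) F (t, r, z)) (at r)"
  using DERIV_along_line[of "dirs bs F" "(t, 0, z)" r er] smooth_on_dirs_differentiable[OF assms]
  by (simp add: er_def dirs_append)

lemma DERIV_dirs_z:
  assumes "smooth_on S F" "open S" "set bs \<subseteq> Basis" "(t, r, z) \<in> S"
  shows "((\<lambda>s. dirs bs F (t, r, s)) has_real_derivative dirs (ez # bs) F (t, r, z)) (at z)"
  using DERIV_along_line[of "dirs bs F" "(t, r, 0)" z ez] smooth_on_dirs_differentiable[OF assms]
  by (simp add: ez_def dirs_append)

lemma unc_apply [simp]: "unc f (t, r, z) = f t r z"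
  by (simp add: unc_def)

lemma open_time_slab: "open ({0<..<T::real} \<times> (UNIV :: real set) \<times> (UNIV :: real set))"
  by (intro open_Times) auto

context
  fixes T :: real and f :: "real \<Rightarrow> real \<Rightarrow> real \<Rightarrow> real"
  assumes f: "smooth_on ({0<..<T} \<times> UNIV \<times> UNIV) (unc f)"
begin

lemma dt_eq_dirs: "0 < t \<Longrightarrow> t < T \<Longrightarrow> dt f t r z = dirs [et] (unc f) (t, r, z)"
  unfolding dt_def using DERIV_dirs_t[OF f open_time_slab, of "[]" t r z] by (simp add: DERIV_imp_deriv)

lemma dr_eq_dirs: "0 < t \<Longrightarrow> t < T \<Longrightarrow> dr f t r z = dirs [er] (unc f) (t, r, z)"
  unfolding dr_def using DERIV_dirs_r[OF f open_time_slab, of "[]" t r z] by (simp add: DERIV_imp_deriv)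

lemma dz_eq_dirs: "0 < t \<Longrightarrow> t < T \<Longrightarrow> dz f t r z = dirs [ez] (unc f) (t, r, z)"
  unfolding dz_def using DERIV_dirs_z[OF f open_time_slab, of "[]" t r z] by (simp add: DERIV_imp_deriv)

lemma dr_dr_eq_dirs: "0 < t \<Longrightarrow> t < T \<Longrightarrow> dr (dr f) t r z = dirs [er, er] (unc f) (t, r, z)"
  unfolding dr_def[of "dr f"] dr_eq_dirs
  using DERIV_dirs_r[OF f open_time_slab, of "[er]" t r z] coordinate_vectors_Basis
  by (simp add: DERIV_imp_deriv)

lemma dz_dz_eq_dirs:
  assumes "0 < t" "t < T"
  shows "dz (dz f) t r z = dirs [ez, ez] (unc f) (t, r, z)"
proof -
  have "dz f t r = (\<lambda>s. dirs [ez] (unc f) (t, r, s))"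
    using assms by (simp add: dz_eq_dirs fun_eq_iff)
  then show ?thesis
    unfolding dz_def[of "dz f"]
    using DERIV_dirs_z[OF f open_time_slab, of "[ez]" t r z] coordinate_vectors_Basis assms
    by (simp add: DERIV_imp_deriv)
qed

lemma lapn_eq_dirs:
  "0 < t \<Longrightarrow> t < T \<Longrightarrow> lapn n f t r z =
     dirs [er, er] (unc f) (t, r, z) + n / r * dirs [er] (unc f) (t, r, z) + dirs [ez, ez] (unc f) (t, r, z)"
  unfolding lapn_def by (simp add: dr_dr_eq_dirs dr_eq_dirs dz_dz_eq_dirs)

lemma dz_square_eq_dirs:
  assumes "0 < t" "t < T"
  shows "dz (\<lambda>t r z. (f t r z)\<^sup>2) t r z = 2 * f t r z * dirs [ez] (unc f) (t, r, z)"
proof -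
  have "((\<lambda>s. (f t r s)\<^sup>2) has_real_derivative 2 * f t r z * dirs [ez] (unc f) (t, r, z)) (at z)"
    using DERIV_dirs_z[OF f open_time_slab, of "[]" t r z] assms by (auto intro!: derivative_eq_intros)
  then show ?thesis unfolding dz_def by (rule DERIV_imp_deriv)
qed

end

section \<open>Rapidly decreasing functions on the half slab\<close>

abbreviation half_slab :: "real \<Rightarrow> (real \<times> real \<times> real) set" where
  "half_slab T \<equiv> {0<..<T} \<times> {0<..} \<times> UNIV"

text \<open>Unlike \<open>rapid_decay\<close>, only the open half slab \<open>r > 0\<close> is involved: the weights \<open>r powr n\<close>
  multiplying the densities below are continuous only there.\<close>

definition rapidly_decreasing :: "real \<Rightarrow> (real \<times> real \<times> real \<Rightarrow> real) \<Rightarrow> bool" where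
  "rapidly_decreasing T H \<longleftrightarrow> continuous_on (half_slab T) H \<and>
     (\<forall>K (N::nat). compact K \<longrightarrow> K \<subseteq> {0<..<T} \<longrightarrow>
        (\<exists>C. \<forall>t\<in>K. \<forall>r>0. \<forall>z. \<bar>H (t, r, z)\<bar> * (1 + r\<^sup>2 + z\<^sup>2) ^ N \<le> C))"

lemma rapidly_decreasing_bound:
  assumes "rapidly_decreasing T H" "compact K" "K \<subseteq> {0<..<T}"
  shows "\<exists>C. \<forall>t\<in>K. \<forall>r>0. \<forall>z. \<bar>H (t, r, z)\<bar> * (1 + r\<^sup>2 + z\<^sup>2) ^ N \<le> C"
  using assms unfolding rapidly_decreasing_def by simp

lemma rapidly_decreasing_continuous_on:
  "rapidly_decreasing T H \<Longrightarrow> continuous_on (half_slab T) H"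
  unfolding rapidly_decreasing_def by blast

lemma rapidly_decreasing_isCont:
  assumes "rapidly_decreasing T H" "0 < t" "t < T" "0 < r"
  shows "isCont H (t, r, z)"
proof -
  have "open (half_slab T)" by (intro open_Times) auto
  then show ?thesis
    using rapidly_decreasing_continuous_on[OF assms(1)] assms(2-) by (simp add: continuous_on_eq_continuous_at)
qed

lemma rapidly_decreasing_cong:
  assumes "rapidly_decreasing T H" "\<And>x. x \<in> half_slab T \<Longrightarrow> H x = G x"
  shows "rapidly_decreasing T G"
  unfolding rapidly_decreasing_def
proof (intro conjI allI impI)
  show "continuous_on (half_slab T) G"
    using rapidly_decreasing_continuous_on[OF assms(1)] by (rule continuous_on_eq) (rule assms(2))
  fix K and N :: nat assume K: "compact K" "K \<subseteq> {0<..<T}"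
  obtain C where C: "\<And>t r z. t \<in> K \<Longrightarrow> 0 < r \<Longrightarrow> \<bar>H (t, r, z)\<bar> * (1 + r\<^sup>2 + z\<^sup>2) ^ N \<le> C"
    using rapidly_decreasing_bound[OF assms(1) K, where N=N] by blast
  have "\<bar>G (t, r, z)\<bar> * (1 + r\<^sup>2 + z\<^sup>2) ^ N \<le> C" if "t \<in> K" "0 < r" for t r z
  proof -
    have "(t, r, z) \<in> half_slab T" using K(2) that by auto
    then show ?thesis using assms(2) C[OF that, of z] by simp
  qed
  then show "\<exists>C. \<forall>t\<in>K. \<forall>r>0. \<forall>z. \<bar>G (t, r, z)\<bar> * (1 + r\<^sup>2 + z\<^sup>2) ^ N \<le> C"
    by blast
qed

lemma rapidly_decreasing_add:
  assumes "rapidly_decreasing T H" "rapidly_decreasing T G"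
  shows "rapidly_decreasing T (\<lambda>x. H x + G x)"
  unfolding rapidly_decreasing_def
proof (intro conjI allI impI)
  show "continuous_on (half_slab T) (\<lambda>x. H x + G x)"
    using assms by (intro continuous_on_add rapidly_decreasing_continuous_on)
  fix K and N :: nat assume K: "compact K" "K \<subseteq> {0<..<T}"
  obtain C1 where C1: "\<And>t r z. t \<in> K \<Longrightarrow> 0 < r \<Longrightarrow> \<bar>H (t, r, z)\<bar> * (1 + r\<^sup>2 + z\<^sup>2) ^ N \<le> C1"
    using rapidly_decreasing_bound[OF assms(1) K, where N=N] by blast
  obtain C2 where C2: "\<And>t r z. t \<in> K \<Longrightarrow> 0 < r \<Longrightarrow> \<bar>G (t, r, z)\<bar> * (1 + r\<^sup>2 + z\<^sup>2) ^ N \<le> C2"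
    using rapidly_decreasing_bound[OF assms(2) K, where N=N] by blast
  have "\<bar>H (t, r, z) + G (t, r, z)\<bar> * (1 + r\<^sup>2 + z\<^sup>2) ^ N \<le> C1 + C2" if "t \<in> K" "0 < r" for t r z
  proof -
    have "\<bar>H (t, r, z) + G (t, r, z)\<bar> * (1 + r\<^sup>2 + z\<^sup>2) ^ N
        \<le> \<bar>H (t, r, z)\<bar> * (1 + r\<^sup>2 + z\<^sup>2) ^ N + \<bar>G (t, r, z)\<bar> * (1 + r\<^sup>2 + z\<^sup>2) ^ N"
      by (simp add: mult_right_mono flip: distrib_right)
    then show ?thesis using C1[OF that, of z] C2[OF that, of z] by linarith
  qed
  then show "\<exists>C. \<forall>t\<in>K. \<forall>r>0. \<forall>z. \<bar>H (t, r, z) + G (t, r, z)\<bar> * (1 + r\<^sup>2 + z\<^sup>2) ^ N \<le> C"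
    by blast
qed

lemma rapidly_decreasing_mult:
  assumes "rapidly_decreasing T H" "rapidly_decreasing T G"
  shows "rapidly_decreasing T (\<lambda>x. H x * G x)"
  unfolding rapidly_decreasing_def
proof (intro conjI allI impI)
  show "continuous_on (half_slab T) (\<lambda>x. H x * G x)"
    using assms by (intro continuous_on_mult rapidly_decreasing_continuous_on)
  fix K and N :: nat assume K: "compact K" "K \<subseteq> {0<..<T}"
  obtain C1 where C1: "\<And>t r z. t \<in> K \<Longrightarrow> 0 < r \<Longrightarrow> \<bar>H (t, r, z)\<bar> * (1 + r\<^sup>2 + z\<^sup>2) ^ 0 \<le> C1"
    using rapidly_decreasing_bound[OF assms(1) K, where N=0] by blast
  obtain C2 where C2: "\<And>t r z. t \<in> K \<Longrightarrow> 0 < r \<Longrightarrow> \<bar>G (t, r, z)\<bar> * (1 + r\<^sup>2 + z\<^sup>2) ^ N \<le> C2"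
    using rapidly_decreasing_bound[OF assms(2) K, where N=N] by blast
  have "\<bar>H (t, r, z) * G (t, r, z)\<bar> * (1 + r\<^sup>2 + z\<^sup>2) ^ N \<le> C1 * C2" if "t \<in> K" "0 < r" for t r z
  proof -
    have "\<bar>H (t, r, z) * G (t, r, z)\<bar> * (1 + r\<^sup>2 + z\<^sup>2) ^ N
        = \<bar>H (t, r, z)\<bar> * (\<bar>G (t, r, z)\<bar> * (1 + r\<^sup>2 + z\<^sup>2) ^ N)"
      by (simp add: abs_mult)
    also have "\<dots> \<le> C1 * C2"
      using C1[OF that, of z] C2[OF that, of z] by (intro mult_mono) auto
    finally show ?thesis .
  qed
  then show "\<exists>C. \<forall>t\<in>K. \<forall>r>0. \<forall>z. \<bar>H (t, r, z) * G (t, r, z)\<bar> * (1 + r\<^sup>2 + z\<^sup>2) ^ N \<le> C"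
    by blast
qed

lemma powr_le_power_weight:
  fixes r z m :: real
  assumes "0 < r" "0 \<le> m"
  shows "r powr m \<le> (1 + r\<^sup>2 + z\<^sup>2) ^ nat \<lceil>m\<rceil>"
proof (cases "r \<le> 1")
  case True
  then have "r powr m \<le> 1" using assms by (simp add: powr_le1)
  also have "1 \<le> (1 + r\<^sup>2 + z\<^sup>2) ^ nat \<lceil>m\<rceil>" by (intro one_le_power) simp
  finally show ?thesis .
next
  case False
  have "r powr m \<le> r powr (nat \<lceil>m\<rceil>)"
    using False assms(2) by (intro powr_mono) linarith+
  also have "\<dots> = r ^ nat \<lceil>m\<rceil>"
    using assms by (subst powr_realpow) (simp_all del: of_nat_nat)
  also have "\<dots> \<le> (1 + r\<^sup>2 + z\<^sup>2) ^ nat \<lceil>m\<rceil>"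
  proof (rule power_mono)
    have "r \<le> r * r" using False by (simp add: mult_le_cancel_left1)
    moreover have "0 \<le> z\<^sup>2" by simp
    ultimately show "r \<le> 1 + r\<^sup>2 + z\<^sup>2" unfolding power2_eq_square by linarith
  qed (use assms in simp)
  finally show ?thesis .
qed

lemma rapidly_decreasing_powr_mult:
  assumes "rapidly_decreasing T H" "0 \<le> m"
  shows "rapidly_decreasing T (\<lambda>x. fst (snd x) powr m * H x)"
  unfolding rapidly_decreasing_def
proof (intro conjI allI impI)
  show "continuous_on (half_slab T) (\<lambda>x. fst (snd x) powr m * H x)"
    using rapidly_decreasing_continuous_on[OF assms(1)] by (intro continuous_intros) auto
  fix K and N :: nat assume K: "compact K" "K \<subseteq> {0<..<T}"
  obtain C where C: "\<And>t r z. t \<in> K \<Longrightarrow> 0 < r \<Longrightarrow>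
      \<bar>H (t, r, z)\<bar> * (1 + r\<^sup>2 + z\<^sup>2) ^ (nat \<lceil>m\<rceil> + N) \<le> C"
    using rapidly_decreasing_bound[OF assms(1) K, where N="nat \<lceil>m\<rceil> + N"] by blast
  have "\<bar>r powr m * H (t, r, z)\<bar> * (1 + r\<^sup>2 + z\<^sup>2) ^ N \<le> C" if "t \<in> K" "0 < r" for t r z
  proof -
    have "\<bar>r powr m * H (t, r, z)\<bar> * (1 + r\<^sup>2 + z\<^sup>2) ^ N
        = r powr m * (\<bar>H (t, r, z)\<bar> * (1 + r\<^sup>2 + z\<^sup>2) ^ N)"
      by (simp add: abs_mult)
    also have "\<dots> \<le> (1 + r\<^sup>2 + z\<^sup>2) ^ nat \<lceil>m\<rceil> * (\<bar>H (t, r, z)\<bar> * (1 + r\<^sup>2 + z\<^sup>2) ^ N)"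
      using powr_le_power_weight[OF that(2) assms(2)] by (intro mult_right_mono) auto
    also have "\<dots> \<le> C"
      using C[OF that, of z] by (simp add: power_add mult_ac)
    finally show ?thesis .
  qed
  then show "\<exists>C. \<forall>t\<in>K. \<forall>r>0. \<forall>z. \<bar>fst (snd (t, r, z)) powr m * H (t, r, z)\<bar> * (1 + r\<^sup>2 + z\<^sup>2) ^ N \<le> C"
    by auto
qed

lemma rapidly_decreasing_const_mult:
  assumes "rapidly_decreasing T H"
  shows "rapidly_decreasing T (\<lambda>x. c * H x)"
  unfolding rapidly_decreasing_def
proof (intro conjI allI impI)
  show "continuous_on (half_slab T) (\<lambda>x. c * H x)"
    using rapidly_decreasing_continuous_on[OF assms(1)] by (intro continuous_intros) auto
  fix K and N :: nat assume K: "compact K" "K \<subseteq> {0<..<T}"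
  obtain C where C: "\<And>t r z. t \<in> K \<Longrightarrow> 0 < r \<Longrightarrow> \<bar>H (t, r, z)\<bar> * (1 + r\<^sup>2 + z\<^sup>2) ^ N \<le> C"
    using rapidly_decreasing_bound[OF assms K, where N=N] by blast
  have "\<bar>c * H (t, r, z)\<bar> * (1 + r\<^sup>2 + z\<^sup>2) ^ N \<le> \<bar>c\<bar> * C" if "t \<in> K" "0 < r" for t r z
    using mult_left_mono[OF C[OF that, of z], of "\<bar>c\<bar>"] by (simp add: abs_mult mult.assoc)
  then show "\<exists>C. \<forall>t\<in>K. \<forall>r>0. \<forall>z. \<bar>c * H (t, r, z)\<bar> * (1 + r\<^sup>2 + z\<^sup>2) ^ N \<le> C"
    by blast
qed

lemma rapidly_decreasing_r_mult:
  assumes "rapidly_decreasing T H"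
  shows "rapidly_decreasing T (\<lambda>x. fst (snd x) * H x)"
  using rapidly_decreasing_powr_mult[OF assms, of 1]
  by (rule rapidly_decreasing_cong) auto

lemma rapidly_decreasing_diff:
  assumes "rapidly_decreasing T H" "rapidly_decreasing T G"
  shows "rapidly_decreasing T (\<lambda>x. H x - G x)"
  using rapidly_decreasing_add[OF assms(1) rapidly_decreasing_const_mult[OF assms(2), of "-1"]]
  by simp

lemma rapidly_decreasing_dirs:
  assumes f: "smooth_on ({0<..<T} \<times> UNIV \<times> UNIV) (unc f)" and dec: "rapid_decay {0<..<T} f"
    and bs: "set bs \<subseteq> Basis"
  shows "rapidly_decreasing T (dirs bs (unc f))"
  unfolding rapidly_decreasing_def
proof (intro conjI allI impI)
  show "continuous_on (half_slab T) (dirs bs (unc f))"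
    by (rule continuous_on_subset[OF smooth_on_dirs_continuous_on[OF f bs]]) auto
  fix K and N :: nat assume K: "compact K" "K \<subseteq> {0<..<T}"
  obtain C where "\<forall>t\<in>K. \<forall>r z. \<bar>dirs bs (unc f) (t, r, z)\<bar> * (1 + r\<^sup>2 + z\<^sup>2) ^ N \<le> C"
    using dec[unfolded rapid_decay_def, rule_format, OF bs K, of N] by blast
  then show "\<exists>C. \<forall>t\<in>K. \<forall>r>0. \<forall>z. \<bar>dirs bs (unc f) (t, r, z)\<bar> * (1 + r\<^sup>2 + z\<^sup>2) ^ N \<le> C"
    by blast
qed

section \<open>Integrals over the half plane \<open>r > 0\<close>\<close>

definition cauchy_weight :: "real \<Rightarrow> real" where
  "cauchy_weight x = inverse (1 + x\<^sup>2)"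

lemma cauchy_weight_pos: "0 < cauchy_weight x"
  by (simp add: cauchy_weight_def add_pos_nonneg)

lemma cauchy_weight_nonneg [simp]: "0 \<le> cauchy_weight x"
  using cauchy_weight_pos[of x] by simp

lemma cauchy_weight_le_1: "cauchy_weight x \<le> 1"
  by (simp add: cauchy_weight_def inverse_le_1_iff)

lemma integrable_cauchy_weight: "integrable lborel cauchy_weight"
  using integrable_inverse_1_plus_square
  by (simp add: set_integrable_def cauchy_weight_def[abs_def])

lemma cauchy_weight_tendsto_0: "(cauchy_weight \<longlongrightarrow> 0) at_top" "(cauchy_weight \<longlongrightarrow> 0) at_bot"
  unfolding cauchy_weight_def by real_asymp+

lemma rapidly_decreasing_cauchy_bound:
  assumes "rapidly_decreasing T H" "compact K" "K \<subseteq> {0<..<T}"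
  shows "\<exists>C\<ge>0. \<forall>t\<in>K. \<forall>r>0. \<forall>z. \<bar>H (t, r, z)\<bar> \<le> C * cauchy_weight r * cauchy_weight z"
proof -
  obtain C where C: "\<And>t r z. t \<in> K \<Longrightarrow> 0 < r \<Longrightarrow> \<bar>H (t, r, z)\<bar> * (1 + r\<^sup>2 + z\<^sup>2) ^ 2 \<le> C"
    using rapidly_decreasing_bound[OF assms, where N=2] by blast
  have "\<bar>H (t, r, z)\<bar> \<le> max C 0 * cauchy_weight r * cauchy_weight z" if "t \<in> K" "0 < r" for t r z
  proof -
    have P: "0 < (1 + r\<^sup>2) * (1 + z\<^sup>2)"
      by (simp add: add_pos_nonneg)
    have "(1 + r\<^sup>2) * (1 + z\<^sup>2) \<le> (1 + r\<^sup>2 + z\<^sup>2) * (1 + r\<^sup>2 + z\<^sup>2)"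
      by (intro mult_mono) auto
    then have "\<bar>H (t, r, z)\<bar> * ((1 + r\<^sup>2) * (1 + z\<^sup>2)) \<le> \<bar>H (t, r, z)\<bar> * (1 + r\<^sup>2 + z\<^sup>2) ^ 2"
      unfolding power2_eq_square[of "1 + r\<^sup>2 + z\<^sup>2"] by (rule mult_left_mono) simp
    also have "\<dots> \<le> max C 0"
      using C[OF that, of z] by linarith
    finally have "\<bar>H (t, r, z)\<bar> \<le> max C 0 / ((1 + r\<^sup>2) * (1 + z\<^sup>2))"
      by (simp only: pos_le_divide_eq[OF P])
    then show ?thesis
      by (simp add: cauchy_weight_def divide_inverse mult.assoc)
  qed
  then show ?thesis by (intro exI[of _ "max C 0"]) auto
qed

definition radial_integral :: "(real \<times> real \<times> real \<Rightarrow> real) \<Rightarrow> real \<Rightarrow> real \<Rightarrow> real" where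
  "radial_integral H t z = (LINT r:{0<..}|lborel. H (t, r, z))"

definition half_plane_integral :: "(real \<times> real \<times> real \<Rightarrow> real) \<Rightarrow> real \<Rightarrow> real" where
  "half_plane_integral H t = (LINT z|lborel. radial_integral H t z)"

lemma radial_integral_indicator:
  "radial_integral H t z = (\<integral>r. indicator {0<..} r * H (t, r, z) \<partial>lborel)"
  by (simp add: radial_integral_def set_lebesgue_integral_def)

lemma radial_slice_measurable:
  fixes H :: "real \<times> real \<times> real \<Rightarrow> real"
  assumes "continuous_on (half_slab T) H" "0 < t" "t < T"
  shows "(\<lambda>r. indicator {0<..} r * H (t, r, z)) \<in> borel_measurable lborel"
proof -
  have "continuous_on {0<..} (\<lambda>r. H (t, r, z))"
    by (rule continuous_on_compose2[OF assms(1)]) (use assms in \<open>auto intro!: continuous_intros\<close>)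
  then have "(\<lambda>r. indicator {0<..} r *\<^sub>R H (t, r, z)) \<in> borel_measurable borel"
    by (intro borel_measurable_continuous_on_indicator) auto
  then show ?thesis by simp
qed

lemma rapidly_decreasing_cauchy_bound_at:
  assumes "rapidly_decreasing T H" "0 < t" "t < T"
  obtains C where "C \<ge> 0" "\<And>r z. 0 < r \<Longrightarrow> \<bar>H (t, r, z)\<bar> \<le> C * cauchy_weight r * cauchy_weight z"
proof -
  have "compact {t}" "{t} \<subseteq> {0<..<T}"
    using assms by auto
  from rapidly_decreasing_cauchy_bound[OF assms(1) this] show ?thesis
    using that by blast
qed

lemma integrable_radial_slice:
  assumes "rapidly_decreasing T H" "0 < t" "t < T"
  shows "integrable lborel (\<lambda>r. indicator {0<..} r * H (t, r, z))"
proof -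
  obtain C where C: "C \<ge> 0" "\<And>r z. 0 < r \<Longrightarrow> \<bar>H (t, r, z)\<bar> \<le> C * cauchy_weight r * cauchy_weight z"
    using rapidly_decreasing_cauchy_bound_at[OF assms] by blast
  show ?thesis
  proof (rule Bochner_Integration.integrable_bound)
    show "integrable lborel (\<lambda>r. C * cauchy_weight z * cauchy_weight r)"
      using integrable_cauchy_weight by simp
    show "(\<lambda>r. indicator {0<..} r * H (t, r, z)) \<in> borel_measurable lborel"
      using radial_slice_measurable[OF rapidly_decreasing_continuous_on[OF assms(1)] assms(2,3)] .
    have "\<bar>indicator {0<..} r * H (t, r, z)\<bar> \<le> C * cauchy_weight z * cauchy_weight r" for r
      using C(1) C(2)[of r z] by (simp add: indicator_def mult_ac)
    then show "AE r in lborel. norm (indicator {0<..} r * H (t, r, z)) \<le> norm (C * cauchy_weight z * cauchy_weight r)"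
      using C(1) by (intro AE_I2) simp
  qed
qed

lemma radial_integral_bound:
  assumes "rapidly_decreasing T H" "compact K" "K \<subseteq> {0<..<T}"
  shows "\<exists>C\<ge>0. \<forall>t\<in>K. \<forall>z. \<bar>radial_integral H t z\<bar> \<le> C * cauchy_weight z"
proof -
  obtain C where C: "C \<ge> 0"
    "\<And>t r z. t \<in> K \<Longrightarrow> 0 < r \<Longrightarrow> \<bar>H (t, r, z)\<bar> \<le> C * cauchy_weight r * cauchy_weight z"
    using rapidly_decreasing_cauchy_bound[OF assms] by auto
  let ?I = "\<integral>r. cauchy_weight r \<partial>lborel"
  show ?thesis
  proof (intro exI[of _ "C * ?I"] conjI ballI allI)
    have "0 \<le> ?I"
      by (rule integral_nonneg_AE) simp
    then show "0 \<le> C * ?I"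
      using C(1) by simp
    fix t z assume t: "t \<in> K"
    have "\<bar>radial_integral H t z\<bar> \<le> (\<integral>r. C * cauchy_weight z * cauchy_weight r \<partial>lborel)"
      unfolding radial_integral_indicator
    proof (rule Bochner_Integration.integral_abs_bound_integral)
      show "integrable lborel (\<lambda>r. indicator {0<..} r * H (t, r, z))"
        using integrable_radial_slice[OF assms(1)] t assms(3) by auto
      show "integrable lborel (\<lambda>r. C * cauchy_weight z * cauchy_weight r)"
        using integrable_cauchy_weight by simp
      show "\<bar>indicator {0<..} r * H (t, r, z)\<bar> \<le> C * cauchy_weight z * cauchy_weight r" for r
        using C(1) C(2)[OF t, of r z] by (simp add: indicator_def mult_ac)
    qed
    then show "\<bar>radial_integral H t z\<bar> \<le> C * ?I * cauchy_weight z" by (simp add: mult_ac)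
  qed
qed

lemma radial_integral_bound_at:
  assumes "rapidly_decreasing T H" "0 < t" "t < T"
  obtains C where "\<And>z. \<bar>radial_integral H t z\<bar> \<le> C * cauchy_weight z"
proof -
  have "compact {t}" "{t} \<subseteq> {0<..<T}"
    using assms by auto
  from radial_integral_bound[OF assms(1) this] show ?thesis
    using that by blast
qed

lemma isCont_radial_integral_z:
  assumes "rapidly_decreasing T H" "0 < t" "t < T"
  shows "isCont (radial_integral H t) z"
proof -
  obtain C where C: "C \<ge> 0" "\<And>r z. 0 < r \<Longrightarrow> \<bar>H (t, r, z)\<bar> \<le> C * cauchy_weight r * cauchy_weight z"
    using rapidly_decreasing_cauchy_bound_at[OF assms] by blast
  show ?thesis
    unfolding radial_integral_indicator
  proof (rule isCont_integral[where d=1 and g="\<lambda>r. C * cauchy_weight r"])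
    show "(\<lambda>r. indicator {0<..} r * H (t, r, s)) \<in> borel_measurable lborel" for s
      using radial_slice_measurable[OF rapidly_decreasing_continuous_on[OF assms(1)] assms(2,3)] .
    show "integrable lborel (\<lambda>r. C * cauchy_weight r)"
      using integrable_cauchy_weight by simp
    show "\<bar>indicator {0<..} r * H (t, r, s)\<bar> \<le> C * cauchy_weight r" for r s
    proof (cases "0 < r")
      case True
      have "\<bar>H (t, r, s)\<bar> \<le> C * cauchy_weight r * cauchy_weight s" by (rule C(2)[OF True])
      also have "\<dots> \<le> C * cauchy_weight r"
        using C(1) cauchy_weight_le_1[of s] by (intro mult_left_le) auto
      finally show ?thesis using True by simp
    qed (use C(1) in simp)
    show "isCont (\<lambda>s. indicator {0<..} r * H (t, r, s)) z" for r
      using rapidly_decreasing_isCont[OF assms, of r z]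
      by (cases "0 < r") (auto intro!: continuous_intros isCont_o2[where g=H])
  qed simp
qed

lemma integrable_radial_integral:
  assumes "rapidly_decreasing T H" "0 < t" "t < T"
  shows "integrable lborel (radial_integral H t)"
proof -
  obtain C where C: "\<And>z. \<bar>radial_integral H t z\<bar> \<le> C * cauchy_weight z"
    using radial_integral_bound_at[OF assms] by blast
  show ?thesis
  proof (rule Bochner_Integration.integrable_bound)
  show "integrable lborel (\<lambda>z. C * cauchy_weight z)"
    using integrable_cauchy_weight by simp
  have "norm (radial_integral H t z) \<le> norm (C * cauchy_weight z)" for z
    using C[of z] abs_ge_self[of "C * cauchy_weight z"] by simp
  then show "AE z in lborel. norm (radial_integral H t z) \<le> norm (C * cauchy_weight z)"
    by (rule AE_I2)
  show "radial_integral H t \<in> borel_measurable lborel"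
    using isCont_radial_integral_z[OF assms]
    by (simp add: borel_measurable_continuous_onI continuous_at_imp_continuous_on)
  qed
qed

lemma time_cball:
  fixes t T :: real
  assumes "0 < t" "t < T"
  shows "\<exists>d>0. cball t d \<subseteq> {0<..<T}"
  using assms by (intro exI[of _ "min t (T - t) / 2"]) (auto simp: dist_real_def abs_if split: if_splits)

lemma DERIV_radial_integral_t:
  assumes H: "rapidly_decreasing T H" and Ht: "rapidly_decreasing T Ht"
    and der: "\<And>s r z. 0 < s \<Longrightarrow> s < T \<Longrightarrow> 0 < r \<Longrightarrow>
      ((\<lambda>s. H (s, r, z)) has_real_derivative Ht (s, r, z)) (at s)"
    and t: "0 < t" "t < T"
  shows "((\<lambda>s. radial_integral H s z) has_real_derivative radial_integral Ht t z) (at t)"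
proof -
  obtain d where d: "d > 0" "cball t d \<subseteq> {0<..<T}"
    using time_cball[OF t] by blast
  then obtain C where C: "C \<ge> 0"
    "\<forall>s\<in>cball t d. \<forall>r>0. \<forall>z. \<bar>Ht (s, r, z)\<bar> \<le> C * cauchy_weight r * cauchy_weight z"
    using rapidly_decreasing_cauchy_bound[OF Ht compact_cball] by blast
  have s: "0 < s" "s < T" if "s \<in> ball t d" for s
    using subsetD[OF d(2) subsetD[OF ball_subset_cball that]] by simp_all
  show ?thesis
    unfolding radial_integral_indicator
  proof (rule has_real_derivative_integral[OF d(1), where g="\<lambda>r. C * cauchy_weight z * cauchy_weight r"])
    show "integrable lborel (\<lambda>r. indicator {0<..} r * H (s, r, z))" if "s \<in> ball t d" for s
      using integrable_radial_slice[OF H s[OF that]] .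
    show "integrable lborel (\<lambda>r. C * cauchy_weight z * cauchy_weight r)"
      using integrable_cauchy_weight by simp
    show "((\<lambda>s. indicator {0<..} r * H (s, r, z)) has_real_derivative indicator {0<..} r * Ht (s, r, z)) (at s)"
      if "s \<in> ball t d" for r s
      using der[OF s[OF that]] by (cases "0 < r") (auto intro: DERIV_cmult)
    show "\<bar>indicator {0<..} r * Ht (s, r, z)\<bar> \<le> C * cauchy_weight z * cauchy_weight r"
      if "s \<in> ball t d" for r s
      using C that by (auto simp: indicator_def mult_ac)
  qed
qed

lemma DERIV_half_plane_integral:
  assumes H: "rapidly_decreasing T H" and Ht: "rapidly_decreasing T Ht"
    and der: "\<And>s r z. 0 < s \<Longrightarrow> s < T \<Longrightarrow> 0 < r \<Longrightarrow>
      ((\<lambda>s. H (s, r, z)) has_real_derivative Ht (s, r, z)) (at s)"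
    and t: "0 < t" "t < T"
  shows "(half_plane_integral H has_real_derivative half_plane_integral Ht t) (at t)"
proof -
  obtain d where d: "d > 0" "cball t d \<subseteq> {0<..<T}"
    using time_cball[OF t] by blast
  then obtain C where C: "\<forall>s\<in>cball t d. \<forall>z. \<bar>radial_integral Ht s z\<bar> \<le> C * cauchy_weight z"
    using radial_integral_bound[OF Ht compact_cball] by blast
  have s: "0 < s" "s < T" if "s \<in> ball t d" for s
    using subsetD[OF d(2) subsetD[OF ball_subset_cball that]] by simp_all
  show ?thesis
    unfolding half_plane_integral_def[abs_def]
  proof (rule has_real_derivative_integral[OF d(1), where g="\<lambda>z. C * cauchy_weight z"])
    show "integrable lborel (radial_integral H s)" if "s \<in> ball t d" for s
      using integrable_radial_integral[OF H s[OF that]] .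
    show "integrable lborel (\<lambda>z. C * cauchy_weight z)"
      using integrable_cauchy_weight by simp
    show "((\<lambda>s. radial_integral H s z) has_real_derivative radial_integral Ht s z) (at s)"
      if "s \<in> ball t d" for z s
      using DERIV_radial_integral_t[OF H Ht der s[OF that]] .
    show "\<bar>radial_integral Ht s z\<bar> \<le> C * cauchy_weight z" if "s \<in> ball t d" for z s
      using C that by auto
  qed
qed

lemma DERIV_radial_integral_z:
  assumes H: "rapidly_decreasing T H" and Hz: "rapidly_decreasing T Hz"
    and der: "\<And>r z. 0 < r \<Longrightarrow> ((\<lambda>z. H (t, r, z)) has_real_derivative Hz (t, r, z)) (at z)"
    and t: "0 < t" "t < T"
  shows "(radial_integral H t has_real_derivative radial_integral Hz t z) (at z)"
proof -
  obtain C where C: "C \<ge> 0" "\<And>r z. 0 < r \<Longrightarrow> \<bar>Hz (t, r, z)\<bar> \<le> C * cauchy_weight r * cauchy_weight z"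
    using rapidly_decreasing_cauchy_bound_at[OF Hz t] by blast
  show ?thesis
    unfolding radial_integral_indicator[abs_def]
  proof (rule has_real_derivative_integral[where d=1 and g="\<lambda>r. C * cauchy_weight r"])
    show "integrable lborel (\<lambda>r. indicator {0<..} r * H (t, r, s))" for s
      using integrable_radial_slice[OF H t] .
    show "integrable lborel (\<lambda>r. C * cauchy_weight r)"
      using integrable_cauchy_weight by simp
    show "((\<lambda>s. indicator {0<..} r * H (t, r, s)) has_real_derivative indicator {0<..} r * Hz (t, r, s)) (at s)"
      for r s
      using der by (cases "0 < r") (auto intro: DERIV_cmult)
    show "\<bar>indicator {0<..} r * Hz (t, r, s)\<bar> \<le> C * cauchy_weight r" for r s
    proof (cases "0 < r")
      case True
      have "\<bar>Hz (t, r, s)\<bar> \<le> C * cauchy_weight r * cauchy_weight s" by (rule C(2)[OF True])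
      also have "\<dots> \<le> C * cauchy_weight r"
        using C(1) cauchy_weight_le_1[of s] by (intro mult_left_le) auto
      finally show ?thesis using True by simp
    qed (use C(1) in simp)
  qed simp
qed

lemma radial_integral_r_derivative:
  assumes H: "rapidly_decreasing T H" and Hr: "rapidly_decreasing T Hr"
    and der: "\<And>r. 0 < r \<Longrightarrow> ((\<lambda>r. H (t, r, z)) has_real_derivative Hr (t, r, z)) (at r)"
    and lim0: "((\<lambda>r. H (t, r, z)) \<longlongrightarrow> 0) (at_right 0)"
    and t: "0 < t" "t < T"
  shows "radial_integral Hr t z = 0"
proof -
  obtain C where C: "C \<ge> 0" "\<And>r z. 0 < r \<Longrightarrow> \<bar>H (t, r, z)\<bar> \<le> C * cauchy_weight r * cauchy_weight z"
    using rapidly_decreasing_cauchy_bound_at[OF H t] by blast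
  have "(LBINT r=ereal 0..\<infinity>. Hr (t, r, z)) = 0 - 0"
  proof (rule interval_integral_FTC_integrable[where F="\<lambda>r. H (t, r, z)"])
    show "((\<lambda>r. H (t, r, z)) has_vector_derivative Hr (t, r, z)) (at r)"
      if "ereal 0 < ereal r" "ereal r < \<infinity>" for r
      using der that by (simp add: has_real_derivative_iff_has_vector_derivative)
    show "isCont (\<lambda>r. Hr (t, r, z)) r" if "ereal 0 < ereal r" "ereal r < \<infinity>" for r
      using rapidly_decreasing_isCont[OF Hr t, of r z] that
      by (auto intro!: continuous_intros isCont_o2[where g=Hr])
    show "set_integrable lborel (einterval (ereal 0) \<infinity>) (\<lambda>r. Hr (t, r, z))"
      using integrable_radial_slice[OF Hr t, of z] by (simp add: set_integrable_def)
    show "(((\<lambda>r. H (t, r, z)) \<circ> real_of_ereal) \<longlongrightarrow> 0) (at_right (ereal 0))"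
      using lim0 by (simp add: ereal_tendsto_simps1)
    have "((\<lambda>r. H (t, r, z)) \<longlongrightarrow> 0) at_top"
    proof (rule Lim_null_comparison)
      show "\<forall>\<^sub>F r in at_top. norm (H (t, r, z)) \<le> C * cauchy_weight z * cauchy_weight r"
        using eventually_gt_at_top[of 0] by eventually_elim (use C in \<open>auto simp: mult_ac\<close>)
      show "((\<lambda>r. C * cauchy_weight z * cauchy_weight r) \<longlongrightarrow> 0) at_top"
        using tendsto_mult_left[OF cauchy_weight_tendsto_0(1), of "C * cauchy_weight z"] by simp
    qed
    then show "(((\<lambda>r. H (t, r, z)) \<circ> real_of_ereal) \<longlongrightarrow> 0) (at_left \<infinity>)"
      by (simp add: ereal_tendsto_simps1)
  qed simp
  then show ?thesis
    by (simp add: interval_lebesgue_integral_def radial_integral_def)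
qed

lemma half_plane_integral_z_derivative:
  assumes H: "rapidly_decreasing T H" and Hz: "rapidly_decreasing T Hz"
    and der: "\<And>r z. 0 < r \<Longrightarrow> ((\<lambda>z. H (t, r, z)) has_real_derivative Hz (t, r, z)) (at z)"
    and t: "0 < t" "t < T"
  shows "half_plane_integral Hz t = 0"
proof -
  obtain C where C: "\<And>z. \<bar>radial_integral H t z\<bar> \<le> C * cauchy_weight z"
    using radial_integral_bound_at[OF H t] by blast
  have lim: "(radial_integral H t \<longlongrightarrow> 0) F" if "(cauchy_weight \<longlongrightarrow> 0) F" for F
  proof (rule Lim_null_comparison)
    show "\<forall>\<^sub>F z in F. norm (radial_integral H t z) \<le> C * cauchy_weight z"
      using C by simp
    show "((\<lambda>z. C * cauchy_weight z) \<longlongrightarrow> 0) F"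
      using tendsto_mult_left[OF that, of C] by simp
  qed
  have "(LBINT z=-\<infinity>..\<infinity>. radial_integral Hz t z) = 0 - 0"
  proof (rule interval_integral_FTC_integrable[where F="radial_integral H t"])
    show "(radial_integral H t has_vector_derivative radial_integral Hz t z) (at z)" for z
      using DERIV_radial_integral_z[OF H Hz der t] by (simp add: has_real_derivative_iff_has_vector_derivative)
    show "isCont (radial_integral Hz t) z" for z
      using isCont_radial_integral_z[OF Hz t] .
    show "set_integrable lborel (einterval (-\<infinity>) \<infinity>) (radial_integral Hz t)"
      using integrable_radial_integral[OF Hz t] by (simp add: set_integrable_def)
    show "((radial_integral H t \<circ> real_of_ereal) \<longlongrightarrow> 0) (at_right (-\<infinity>))"
      using lim[OF cauchy_weight_tendsto_0(2)] by (simp add: ereal_tendsto_simps1)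
    show "((radial_integral H t \<circ> real_of_ereal) \<longlongrightarrow> 0) (at_left \<infinity>)"
      using lim[OF cauchy_weight_tendsto_0(1)] by (simp add: ereal_tendsto_simps1)
  qed simp
  then show ?thesis
    by (simp add: interval_lebesgue_integral_def set_lebesgue_integral_def half_plane_integral_def)
qed

lemma radial_integral_add:
  assumes "rapidly_decreasing T F" "rapidly_decreasing T G" "0 < t" "t < T"
  shows "radial_integral (\<lambda>x. F x + G x) t z = radial_integral F t z + radial_integral G t z"
  unfolding radial_integral_indicator
  using integrable_radial_slice[OF assms(1,3,4), of z] integrable_radial_slice[OF assms(2,3,4), of z]
  by (simp add: distrib_left)

lemma radial_integral_const_mult: "radial_integral (\<lambda>x. c * F x) t z = c * radial_integral F t z"
  unfolding radial_integral_indicator by (simp add: mult.left_commute)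

section \<open>The energy identity\<close>

text \<open>A pointwise identity between the values of \<open>u\<^sub>1\<close> (\<open>U\<close>), \<open>\<omega>\<^sub>1\<close> (\<open>W\<close>), \<open>\<psi>\<^sub>1\<close> (\<open>P\<close>) and their
  partial derivatives (suffixes \<open>t, r, z\<close>), with \<open>w = r\<^sup>n\<close> and \<open>wr = \<partial>\<^sub>r w\<close>: the right-hand side is
  \<open>-\<nu>\<close> times the dissipation density plus the \<open>r\<close>-derivative of the radial flux and the
  \<open>z\<close>-derivative of the axial flux.\<close>

lemma energy_balance_identity:
  fixes n \<nu> r w wr U Ur Uz Urr Uzz Ut P Pr Pz Prr Pzz Prz Prt Pzt Prrt Pzzt W Wr Wz Wrr Wzz Wt :: real
  assumes r: "r > 0" and wr: "wr = n * w / r"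
    and hu: "Ut + (- r * Pz) * Ur + ((n - 1) * P + r * Pr) * Uz = 2 * U * Pz + \<nu> * (Urr + n / r * Ur + Uzz)"
    and hw: "Wt + (- r * Pz) * Wr + ((n - 1) * P + r * Pr) * Wz
           = 2 * U * Uz - (n - 3) * Pz * W + \<nu> * (Wrr + n / r * Wr + Wzz)"
    and hp: "- (Prr + n / r * Pr + Pzz) = W"
    and ht: "Wt = - (Prrt + n / r * Prt + Pzzt)"
  shows "(U * Ut + Pr * Prt + Pz * Pzt) * w =
     - \<nu> * (Ur\<^sup>2 + Uz\<^sup>2 + W\<^sup>2) * w
     + (wr * (P * Prt + r * Pz * (U\<^sup>2 / 2 + P * W) + \<nu> * (U * Ur + P * Wr - W * Pr))
        + w * (Pr * Prt + P * Prrt + (Pz + r * Prz) * (U\<^sup>2 / 2 + P * W)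
               + r * Pz * (U * Ur + Pr * W + P * Wr)
               + \<nu> * (Ur * Ur + U * Urr + Pr * Wr + P * Wrr - Wr * Pr - W * Prr)))
     + w * (Pz * Pzt + P * Pzzt - ((n - 1) * Pz + r * Prz) * (U\<^sup>2 / 2 + P * W)
            - ((n - 1) * P + r * Pr) * (U * Uz + Pz * W + P * Wz) + Pz * U\<^sup>2 + 2 * P * U * Uz
            + \<nu> * (Uz * Uz + U * Uzz + Pz * Wz + P * Wzz - Wz * Pz - W * Pzz))"
proof -
  have Ut: "Ut = 2 * U * Pz + \<nu> * (Urr + n / r * Ur + Uzz) - ((- r * Pz) * Ur + ((n - 1) * P + r * Pr) * Uz)"
    using hu by (simp add: algebra_simps)
  have Wt: "Wt = 2 * U * Uz - (n - 3) * Pz * W + \<nu> * (Wrr + n / r * Wr + Wzz)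
      - ((- r * Pz) * Wr + ((n - 1) * P + r * Pr) * Wz)"
    using hw by (simp add: algebra_simps)
  have Prrt: "Prrt = - Wt - n / r * Prt - Pzzt" using ht by simp
  have Prr: "Prr = - W - n / r * Pr - Pzz" using hp by simp
  show ?thesis
    unfolding Ut Prrt Wt Prr wr using r by (simp add: field_simps power2_eq_square)
qed

locale axisymmetric_navier_stokes =
  fixes n \<nu> T :: real and u \<omega> \<psi> :: "real \<Rightarrow> real \<Rightarrow> real \<Rightarrow> real"
  assumes n: "n \<ge> 2" and nu: "\<nu> \<ge> 0"
    and smooth_u: "smooth_on ({0<..<T} \<times> UNIV \<times> UNIV) (unc u)"
    and smooth_\<omega>: "smooth_on ({0<..<T} \<times> UNIV \<times> UNIV) (unc \<omega>)"
    and smooth_\<psi>: "smooth_on ({0<..<T} \<times> UNIV \<times> UNIV) (unc \<psi>)"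
    and decay_u: "rapid_decay {0<..<T} u"
    and decay_\<omega>: "rapid_decay {0<..<T} \<omega>"
    and decay_\<psi>: "rapid_decay {0<..<T} \<psi>"
    and eq_u: "\<And>t r z. 0 < t \<Longrightarrow> t < T \<Longrightarrow> 0 < r \<Longrightarrow>
        dt u t r z + (- r * dz \<psi> t r z) * dr u t r z
          + ((n - 1) * \<psi> t r z + r * dr \<psi> t r z) * dz u t r z
        = 2 * u t r z * dz \<psi> t r z + \<nu> * lapn n u t r z"
    and eq_\<omega>: "\<And>t r z. 0 < t \<Longrightarrow> t < T \<Longrightarrow> 0 < r \<Longrightarrow>
        dt \<omega> t r z + (- r * dz \<psi> t r z) * dr \<omega> t r z
          + ((n - 1) * \<psi> t r z + r * dr \<psi> t r z) * dz \<omega> t r z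
        = dz (\<lambda>t r z. (u t r z)\<^sup>2) t r z - (n - 3) * dz \<psi> t r z * \<omega> t r z
          + \<nu> * lapn n \<omega> t r z"
    and eq_\<psi>: "\<And>t r z. 0 < t \<Longrightarrow> t < T \<Longrightarrow> 0 < r \<Longrightarrow> - lapn n \<psi> t r z = \<omega> t r z"
begin

abbreviation "Du bs \<equiv> dirs bs (unc u)"
abbreviation "D\<omega> bs \<equiv> dirs bs (unc \<omega>)"
abbreviation "D\<psi> bs \<equiv> dirs bs (unc \<psi>)"

lemma rapidly_decreasing_derivatives:
  assumes "set bs \<subseteq> Basis"
  shows "rapidly_decreasing T (Du bs)" "rapidly_decreasing T (D\<omega> bs)" "rapidly_decreasing T (D\<psi> bs)"
  using rapidly_decreasing_dirs[OF smooth_u decay_u assms] rapidly_decreasing_dirs[OF smooth_\<omega> decay_\<omega> assms]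
    rapidly_decreasing_dirs[OF smooth_\<psi> decay_\<psi> assms] .

text \<open>\<open>radial_flux\<close> and \<open>axial_flux\<close> are the fluxes \<open>r\<^sup>n Q\<close> and \<open>r\<^sup>n R\<close> of the introduction; a suffix
  \<open>_t\<close>, \<open>_r\<close> or \<open>_z\<close> marks a partial derivative.\<close>

definition weight :: "real \<times> real \<times> real \<Rightarrow> real" where
  "weight x = fst (snd x) powr n"

definition weight_r :: "real \<times> real \<times> real \<Rightarrow> real" where
  "weight_r x = n * fst (snd x) powr (n - 1)"

definition energy_density :: "real \<times> real \<times> real \<Rightarrow> real" where
  "energy_density x = weight x * (Du [] x * Du [] x + D\<psi> [er] x * D\<psi> [er] x + D\<psi> [ez] x * D\<psi> [ez] x)"

definition energy_density_t :: "real \<times> real \<times> real \<Rightarrow> real" where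
  "energy_density_t x = weight x * (2 * (Du [] x * Du [et] x) + 2 * (D\<psi> [er] x * D\<psi> [et, er] x)
     + 2 * (D\<psi> [ez] x * D\<psi> [et, ez] x))"

definition dissipation_density :: "real \<times> real \<times> real \<Rightarrow> real" where
  "dissipation_density x = weight x * (Du [er] x * Du [er] x + Du [ez] x * Du [ez] x + D\<omega> [] x * D\<omega> [] x)"

definition convective_factor :: "real \<times> real \<times> real \<Rightarrow> real" where
  "convective_factor x = (1/2) * (Du [] x * Du [] x) + D\<psi> [] x * D\<omega> [] x"

definition convective_factor_r :: "real \<times> real \<times> real \<Rightarrow> real" where
  "convective_factor_r x = Du [] x * Du [er] x + (D\<psi> [er] x * D\<omega> [] x + D\<psi> [] x * D\<omega> [er] x)"

definition convective_factor_z :: "real \<times> real \<times> real \<Rightarrow> real" where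
  "convective_factor_z x = Du [] x * Du [ez] x + (D\<psi> [ez] x * D\<omega> [] x + D\<psi> [] x * D\<omega> [ez] x)"

definition radial_flux_coeff :: "real \<times> real \<times> real \<Rightarrow> real" where
  "radial_flux_coeff x = D\<psi> [] x * D\<psi> [et, er] x + fst (snd x) * (D\<psi> [ez] x * convective_factor x)
     + \<nu> * (Du [] x * Du [er] x + D\<psi> [] x * D\<omega> [er] x - D\<omega> [] x * D\<psi> [er] x)"

definition radial_flux :: "real \<times> real \<times> real \<Rightarrow> real" where
  "radial_flux x = weight x * radial_flux_coeff x"

definition radial_flux_r :: "real \<times> real \<times> real \<Rightarrow> real" where
  "radial_flux_r x = weight_r x * radial_flux_coeff x + weight x *
     (D\<psi> [er] x * D\<psi> [et, er] x + D\<psi> [] x * D\<psi> [er, et, er] x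
      + (D\<psi> [ez] x * convective_factor x + fst (snd x) * (D\<psi> [er, ez] x * convective_factor x + D\<psi> [ez] x * convective_factor_r x))
      + \<nu> * (Du [er] x * Du [er] x + Du [] x * Du [er, er] x + (D\<psi> [er] x * D\<omega> [er] x + D\<psi> [] x * D\<omega> [er, er] x)
             - (D\<omega> [er] x * D\<psi> [er] x + D\<omega> [] x * D\<psi> [er, er] x)))"

definition axial_flux :: "real \<times> real \<times> real \<Rightarrow> real" where
  "axial_flux x = weight x *
     (D\<psi> [] x * D\<psi> [et, ez] x - ((n - 1) * D\<psi> [] x + fst (snd x) * D\<psi> [er] x) * convective_factor x
      + D\<psi> [] x * (Du [] x * Du [] x)
      + \<nu> * (Du [] x * Du [ez] x + D\<psi> [] x * D\<omega> [ez] x - D\<omega> [] x * D\<psi> [ez] x))"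

definition axial_flux_z :: "real \<times> real \<times> real \<Rightarrow> real" where
  "axial_flux_z x = weight x *
     (D\<psi> [ez] x * D\<psi> [et, ez] x + D\<psi> [] x * D\<psi> [ez, et, ez] x
      - (((n - 1) * D\<psi> [ez] x + fst (snd x) * D\<psi> [ez, er] x) * convective_factor x
         + ((n - 1) * D\<psi> [] x + fst (snd x) * D\<psi> [er] x) * convective_factor_z x)
      + (D\<psi> [ez] x * (Du [] x * Du [] x) + D\<psi> [] x * (2 * (Du [] x * Du [ez] x)))
      + \<nu> * (Du [ez] x * Du [ez] x + Du [] x * Du [ez, ez] x + (D\<psi> [ez] x * D\<omega> [ez] x + D\<psi> [] x * D\<omega> [ez, ez] x)
             - (D\<omega> [ez] x * D\<psi> [ez] x + D\<omega> [] x * D\<psi> [ez, ez] x)))"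

lemmas rapidly_decreasing_intros =
  rapidly_decreasing_add rapidly_decreasing_diff rapidly_decreasing_mult
  rapidly_decreasing_const_mult rapidly_decreasing_r_mult rapidly_decreasing_derivatives

lemma rapidly_decreasing_weight_mult:
  "rapidly_decreasing T H \<Longrightarrow> rapidly_decreasing T (\<lambda>x. weight x * H x)"
  unfolding weight_def using n by (intro rapidly_decreasing_powr_mult) auto

lemma rapidly_decreasing_weight_r_mult:
  "rapidly_decreasing T H \<Longrightarrow> rapidly_decreasing T (\<lambda>x. weight_r x * H x)"
  unfolding weight_r_def using n
  by (subst mult.assoc) (intro rapidly_decreasing_const_mult rapidly_decreasing_powr_mult; simp)

lemma rapidly_decreasing_convective_factor:
  "rapidly_decreasing T convective_factor" "rapidly_decreasing T convective_factor_r" "rapidly_decreasing T convective_factor_z"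
  unfolding convective_factor_def[abs_def] convective_factor_r_def[abs_def] convective_factor_z_def[abs_def]
  by (intro rapidly_decreasing_intros; simp add: coordinate_vectors_Basis)+

lemma rapidly_decreasing_densities:
  "rapidly_decreasing T energy_density" "rapidly_decreasing T energy_density_t"
  "rapidly_decreasing T dissipation_density"
  "rapidly_decreasing T radial_flux" "rapidly_decreasing T radial_flux_r"
  "rapidly_decreasing T axial_flux" "rapidly_decreasing T axial_flux_z"
  unfolding energy_density_def[abs_def] energy_density_t_def[abs_def] dissipation_density_def[abs_def]
    radial_flux_def[abs_def] radial_flux_r_def[abs_def] radial_flux_coeff_def
    axial_flux_def[abs_def] axial_flux_z_def[abs_def]
  by (intro rapidly_decreasing_weight_mult rapidly_decreasing_weight_r_mult rapidly_decreasing_intros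
      rapidly_decreasing_convective_factor; simp add: coordinate_vectors_Basis)+

lemma DERIV_radial_flux:
  assumes "0 < t" "t < T" "0 < r"
  shows "((\<lambda>\<rho>. radial_flux (t, \<rho>, z)) has_real_derivative radial_flux_r (t, r, z)) (at r)"
  unfolding radial_flux_def radial_flux_coeff_def convective_factor_def weight_def fst_conv snd_conv
  by (intro derivative_eq_intros
      DERIV_dirs_r[THEN DERIV_cong, OF smooth_\<psi> open_time_slab]
      DERIV_dirs_r[THEN DERIV_cong, OF smooth_u open_time_slab]
      DERIV_dirs_r[THEN DERIV_cong, OF smooth_\<omega> open_time_slab];
      simp add: assms coordinate_vectors_Basis)
    (simp add: radial_flux_r_def radial_flux_coeff_def convective_factor_def convective_factor_r_def weight_def
      weight_r_def algebra_simps)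

lemma DERIV_axial_flux:
  assumes "0 < t" "t < T" "0 < r"
  shows "((\<lambda>\<zeta>. axial_flux (t, r, \<zeta>)) has_real_derivative axial_flux_z (t, r, z)) (at z)"
  unfolding axial_flux_def convective_factor_def weight_def fst_conv snd_conv
  by (intro derivative_eq_intros
      DERIV_dirs_z[THEN DERIV_cong, OF smooth_\<psi> open_time_slab]
      DERIV_dirs_z[THEN DERIV_cong, OF smooth_u open_time_slab]
      DERIV_dirs_z[THEN DERIV_cong, OF smooth_\<omega> open_time_slab];
      simp add: assms coordinate_vectors_Basis)
    (simp add: axial_flux_z_def convective_factor_def convective_factor_z_def weight_def algebra_simps)

lemma DERIV_energy_density:
  assumes "0 < t" "t < T" "0 < r"
  shows "((\<lambda>\<tau>. energy_density (\<tau>, r, z)) has_real_derivative energy_density_t (t, r, z)) (at t)"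
  unfolding energy_density_def weight_def fst_conv snd_conv
  by (intro derivative_eq_intros
      DERIV_dirs_t[THEN DERIV_cong, OF smooth_\<psi> open_time_slab]
      DERIV_dirs_t[THEN DERIV_cong, OF smooth_u open_time_slab];
      simp add: assms coordinate_vectors_Basis)
    (simp add: energy_density_t_def weight_def)

lemma vorticity_t_eq:
  assumes t: "0 < t" "t < T" and r: "0 < r"
  shows "D\<omega> [et] (t, r, z) = - (D\<psi> [et, er, er] (t, r, z) + n / r * D\<psi> [et, er] (t, r, z) + D\<psi> [et, ez, ez] (t, r, z))"
proof -
  have d: "((\<lambda>s. - (D\<psi> [er, er] (s, r, z) + n / r * D\<psi> [er] (s, r, z) + D\<psi> [ez, ez] (s, r, z))) has_real_derivative
      - (D\<psi> [et, er, er] (t, r, z) + n / r * D\<psi> [et, er] (t, r, z) + D\<psi> [et, ez, ez] (t, r, z))) (at t)"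
    by (intro derivative_eq_intros DERIV_dirs_t[THEN DERIV_cong, OF smooth_\<psi> open_time_slab];
        simp add: t coordinate_vectors_Basis)
      (simp add: algebra_simps)
  have eq: "- (D\<psi> [er, er] (s, r, z) + n / r * D\<psi> [er] (s, r, z) + D\<psi> [ez, ez] (s, r, z)) = \<omega> s r z"
    if "s \<in> {0<..<T}" for s
    using eq_\<psi>[of s r z] lapn_eq_dirs[OF smooth_\<psi>, of s n r z] that r by simp
  have "((\<lambda>s. \<omega> s r z) has_real_derivative
      - (D\<psi> [et, er, er] (t, r, z) + n / r * D\<psi> [et, er] (t, r, z) + D\<psi> [et, ez, ez] (t, r, z))) (at t)"
    by (rule has_field_derivative_transform_within_open[OF d, where S="{0<..<T}"]) (use t eq in auto)
  moreover have "((\<lambda>s. \<omega> s r z) has_real_derivative D\<omega> [et] (t, r, z)) (at t)"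
    using DERIV_dirs_t[OF smooth_\<omega> open_time_slab, of "[]" t r z] t by simp
  ultimately show ?thesis
    using DERIV_unique by blast
qed

lemma energy_density_t_eq:
  assumes t: "0 < t" "t < T" and r: "0 < r"
  shows "energy_density_t (t, r, z)
    = 2 * (- \<nu> * dissipation_density (t, r, z) + radial_flux_r (t, r, z) + axial_flux_z (t, r, z))"
proof -
  let ?x = "(t, r, z)"
  have in_slab: "?x \<in> {0<..<T} \<times> UNIV \<times> UNIV"
    using t by simp
  have wr: "weight_r ?x = n * weight ?x / r"
    using r by (simp add: weight_r_def weight_def powr_diff)
  have hu: "Du [et] ?x + (- r * D\<psi> [ez] ?x) * Du [er] ?x + ((n - 1) * D\<psi> [] ?x + r * D\<psi> [er] ?x) * Du [ez] ?x
      = 2 * Du [] ?x * D\<psi> [ez] ?x + \<nu> * (Du [er, er] ?x + n / r * Du [er] ?x + Du [ez, ez] ?x)"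
    using eq_u[OF t r, of z] t
    by (simp add: dt_eq_dirs[OF smooth_u] dr_eq_dirs[OF smooth_u] dz_eq_dirs[OF smooth_u]
        dr_eq_dirs[OF smooth_\<psi>] dz_eq_dirs[OF smooth_\<psi>] lapn_eq_dirs[OF smooth_u])
  have h\<omega>: "D\<omega> [et] ?x + (- r * D\<psi> [ez] ?x) * D\<omega> [er] ?x + ((n - 1) * D\<psi> [] ?x + r * D\<psi> [er] ?x) * D\<omega> [ez] ?x
      = 2 * Du [] ?x * Du [ez] ?x - (n - 3) * D\<psi> [ez] ?x * D\<omega> [] ?x
        + \<nu> * (D\<omega> [er, er] ?x + n / r * D\<omega> [er] ?x + D\<omega> [ez, ez] ?x)"
    using eq_\<omega>[OF t r, of z] t
    by (simp add: dt_eq_dirs[OF smooth_\<omega>] dr_eq_dirs[OF smooth_\<omega>] dz_eq_dirs[OF smooth_\<omega>]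
        dr_eq_dirs[OF smooth_\<psi>] dz_eq_dirs[OF smooth_\<psi>] lapn_eq_dirs[OF smooth_\<omega>]
        dz_square_eq_dirs[OF smooth_u])
  have h\<psi>: "- (D\<psi> [er, er] ?x + n / r * D\<psi> [er] ?x + D\<psi> [ez, ez] ?x) = D\<omega> [] ?x"
    using eq_\<psi>[OF t r, of z] t by (simp add: lapn_eq_dirs[OF smooth_\<psi>])
  have commute: "D\<psi> [er, et, er] ?x = D\<psi> [et, er, er] ?x" "D\<psi> [ez, et, ez] ?x = D\<psi> [et, ez, ez] ?x"
    "D\<psi> [ez, er] ?x = D\<psi> [er, ez] ?x"
    using smooth_on_dirs_commute[OF smooth_\<psi> open_time_slab _ _ _ in_slab] coordinate_vectors_Basis
    by simp_all
  have h\<omega>t: "D\<omega> [et] ?x = - (D\<psi> [er, et, er] ?x + n / r * D\<psi> [et, er] ?x + D\<psi> [ez, et, ez] ?x)"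
    using vorticity_t_eq[OF t r, of z] commute by simp
  show ?thesis
    using energy_balance_identity[OF r wr hu h\<omega> h\<psi> h\<omega>t, where Prz = "D\<psi> [er, ez] ?x" and Pzt = "D\<psi> [et, ez] ?x"]
    unfolding energy_density_t_def dissipation_density_def radial_flux_r_def axial_flux_z_def
      radial_flux_coeff_def convective_factor_def convective_factor_r_def convective_factor_z_def commute
    by (simp add: algebra_simps power2_eq_square)
qed

lemma radial_flux_tendsto_0:
  assumes t: "0 < t" "t < T"
  shows "((\<lambda>r. radial_flux (t, r, z)) \<longlongrightarrow> 0) (at_right 0)"
proof -
  have "continuous_on ({0<..<T} \<times> UNIV \<times> UNIV) radial_flux_coeff"
    unfolding radial_flux_coeff_def[abs_def] convective_factor_def
    by (intro continuous_intros smooth_on_dirs_continuous_on[OF smooth_\<psi>]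
        smooth_on_dirs_continuous_on[OF smooth_u] smooth_on_dirs_continuous_on[OF smooth_\<omega>];
        simp add: coordinate_vectors_Basis)
  then have "isCont radial_flux_coeff (t, 0, z)"
    using open_time_slab t by (simp add: continuous_on_eq_continuous_at)
  then have coeff: "((\<lambda>r. radial_flux_coeff (t, r, z)) \<longlongrightarrow> radial_flux_coeff (t, 0, z)) (at_right 0)"
    by (intro filterlim_at_split[THEN iffD1, THEN conjunct2] isCont_tendsto_compose[where g=radial_flux_coeff])
      (auto intro!: tendsto_intros)
  have "((\<lambda>r. r powr n) \<longlongrightarrow> 0) (at_right 0)"
    using n by (intro tendsto_zero_powrI tendsto_ident_at eventually_at_rightI[of 0 1]) auto
  from tendsto_mult[OF this coeff]
  have "((\<lambda>r. r powr n * radial_flux_coeff (t, r, z)) \<longlongrightarrow> 0 * radial_flux_coeff (t, 0, z)) (at_right 0)" .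
  then show ?thesis
    by (simp add: radial_flux_def weight_def)
qed

lemma radial_integral_radial_flux_r:
  assumes "0 < t" "t < T"
  shows "radial_integral radial_flux_r t z = 0"
  using rapidly_decreasing_densities(4,5) DERIV_radial_flux[OF assms] radial_flux_tendsto_0[OF assms] assms
  by (rule radial_integral_r_derivative)

lemma half_plane_integral_axial_flux_z:
  assumes "0 < t" "t < T"
  shows "half_plane_integral axial_flux_z t = 0"
  using rapidly_decreasing_densities(6,7) DERIV_axial_flux[OF assms] assms
  by (rule half_plane_integral_z_derivative)

lemma radial_integral_energy_density_t:
  assumes t: "0 < t" "t < T"
  shows "radial_integral energy_density_t t z
    = 2 * (- \<nu> * radial_integral dissipation_density t z + radial_integral axial_flux_z t z)"
proof -
  note rd = rapidly_decreasing_densities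
  have "radial_integral energy_density_t t z
      = radial_integral (\<lambda>x. 2 * (- \<nu> * dissipation_density x + radial_flux_r x + axial_flux_z x)) t z"
    unfolding radial_integral_def by (rule set_lebesgue_integral_cong) (use energy_density_t_eq t in auto)
  also have "\<dots> = 2 * radial_integral (\<lambda>x. - \<nu> * dissipation_density x + radial_flux_r x + axial_flux_z x) t z"
    by (rule radial_integral_const_mult)
  also have "radial_integral (\<lambda>x. - \<nu> * dissipation_density x + radial_flux_r x + axial_flux_z x) t z
      = radial_integral (\<lambda>x. - \<nu> * dissipation_density x + radial_flux_r x) t z + radial_integral axial_flux_z t z"
    by (rule radial_integral_add[OF rapidly_decreasing_add[OF rapidly_decreasing_const_mult[OF rd(3)] rd(5)] rd(7) t])
  also have "radial_integral (\<lambda>x. - \<nu> * dissipation_density x + radial_flux_r x) t z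
      = radial_integral (\<lambda>x. - \<nu> * dissipation_density x) t z + radial_integral radial_flux_r t z"
    by (rule radial_integral_add[OF rapidly_decreasing_const_mult[OF rd(3)] rd(5) t])
  also have "radial_integral (\<lambda>x. - \<nu> * dissipation_density x) t z = - \<nu> * radial_integral dissipation_density t z"
    by (rule radial_integral_const_mult)
  finally show ?thesis
    using radial_integral_radial_flux_r[OF t] by simp
qed

lemma half_plane_integral_energy_density_t:
  assumes t: "0 < t" "t < T"
  shows "half_plane_integral energy_density_t t = - 2 * \<nu> * half_plane_integral dissipation_density t"
proof -
  note rd = rapidly_decreasing_densities
  have "half_plane_integral energy_density_t t
      = (LINT z|lborel. 2 * (- \<nu> * radial_integral dissipation_density t z + radial_integral axial_flux_z t z))"
    unfolding half_plane_integral_def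
    by (rule Bochner_Integration.integral_cong[OF refl]) (rule radial_integral_energy_density_t[OF t])
  also have "\<dots> = 2 * (- \<nu> * half_plane_integral dissipation_density t + half_plane_integral axial_flux_z t)"
    using integrable_radial_integral[OF rd(3) t] integrable_radial_integral[OF rd(7) t]
    by (simp add: half_plane_integral_def)
  finally show ?thesis
    using half_plane_integral_axial_flux_z[OF t] by simp
qed

definition energy :: "real \<Rightarrow> real" where
  "energy s = wint n (\<lambda>r z. (u s r z)\<^sup>2 + (dr \<psi> s r z)\<^sup>2 + (dz \<psi> s r z)\<^sup>2)"

definition dissipation :: "real \<Rightarrow> real" where
  "dissipation t = wint n (\<lambda>r z. (dr u t r z)\<^sup>2 + (dz u t r z)\<^sup>2 + (lapn n \<psi> t r z)\<^sup>2)"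

lemma energy_eq_half_plane_integral:
  assumes "0 < s" "s < T"
  shows "energy s = half_plane_integral energy_density s"
proof -
  have "(\<lambda>r. ((u s r z)\<^sup>2 + (dr \<psi> s r z)\<^sup>2 + (dz \<psi> s r z)\<^sup>2) * r powr n) = (\<lambda>r. energy_density (s, r, z))" for z
    using assms by (auto simp: energy_density_def weight_def dr_eq_dirs[OF smooth_\<psi>] dz_eq_dirs[OF smooth_\<psi>]
        power2_eq_square mult.commute)
  then show ?thesis
    by (simp add: energy_def wint_def half_plane_integral_def radial_integral_def)
qed

lemma dissipation_eq_half_plane_integral:
  assumes t: "0 < t" "t < T"
  shows "dissipation t = half_plane_integral dissipation_density t"
proof -
  have "((dr u t r z)\<^sup>2 + (dz u t r z)\<^sup>2 + (lapn n \<psi> t r z)\<^sup>2) * r powr n = dissipation_density (t, r, z)"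
    if "r \<in> {0<..}" for r z
  proof -
    have "(lapn n \<psi> t r z)\<^sup>2 = (\<omega> t r z)\<^sup>2"
      using eq_\<psi>[OF t, of r z] that by (metis greaterThan_iff power2_minus)
    then show ?thesis
      using t by (simp add: dissipation_density_def weight_def dr_eq_dirs[OF smooth_u] dz_eq_dirs[OF smooth_u]
          power2_eq_square mult.commute)
  qed
  then have "(LINT r:{0<..}|lborel. ((dr u t r z)\<^sup>2 + (dz u t r z)\<^sup>2 + (lapn n \<psi> t r z)\<^sup>2) * r powr n)
      = radial_integral dissipation_density t z" for z
    unfolding radial_integral_def by (intro set_lebesgue_integral_cong) auto
  then show ?thesis
    by (simp add: dissipation_def wint_def half_plane_integral_def)
qed

lemma dissipation_nonneg:
  assumes "0 < t" "t < T"
  shows "0 \<le> dissipation t"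
  unfolding dissipation_eq_half_plane_integral[OF assms] half_plane_integral_def radial_integral_indicator
  by (intro integral_nonneg_AE AE_I2) (auto simp: dissipation_density_def weight_def indicator_def)

lemma energy_has_derivative:
  assumes t: "0 < t" "t < T"
  shows "((\<lambda>s. (1/2) * energy s) has_real_derivative - \<nu> * dissipation t) (at t)"
proof -
  have "((\<lambda>s. (1/2) * half_plane_integral energy_density s) has_real_derivative
      (1/2) * half_plane_integral energy_density_t t) (at t)"
    using rapidly_decreasing_densities(1,2) DERIV_energy_density t
    by (intro DERIV_cmult DERIV_half_plane_integral)
  then have "((\<lambda>s. (1/2) * half_plane_integral energy_density s) has_real_derivative - \<nu> * dissipation t) (at t)"
    by (simp add: half_plane_integral_energy_density_t dissipation_eq_half_plane_integral t)
  then show ?thesis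
    by (rule has_field_derivative_transform_within_open[where S="{0<..<T}"])
      (use t energy_eq_half_plane_integral in auto)
qed

lemma energy_constant:
  assumes "\<nu> = 0" "s \<in> {0<..<T}" "t \<in> {0<..<T}"
  shows "energy s = energy t"
proof -
  have "\<exists>c. \<forall>x\<in>{0<..<T}. (1/2) * energy x = c"
  proof (rule has_field_derivative_zero_constant)
    show "((\<lambda>s. (1/2) * energy s) has_field_derivative 0) (at x within {0<..<T})" if "x \<in> {0<..<T}" for x
      using energy_has_derivative[of x] that assms(1) by (simp add: has_field_derivative_at_within)
  qed simp
  then show ?thesis
    using assms(2,3) by force
qed

lemma energy_antimono:
  assumes "s \<in> {0<..<T}" "t \<in> {0<..<T}" "s \<le> t"
  shows "energy t \<le> energy s"
proof -
  have "(1/2) * energy t \<le> (1/2) * energy s"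
  proof (rule DERIV_nonpos_imp_nonincreasing[OF assms(3)])
    fix x assume "s \<le> x" "x \<le> t"
    then have x: "0 < x" "x < T" using assms by auto
    show "\<exists>y. ((\<lambda>s. (1/2) * energy s) has_real_derivative y) (at x) \<and> y \<le> 0"
      using energy_has_derivative[OF x] dissipation_nonneg[OF x] nu by (intro exI conjI) auto
  qed
  then show ?thesis by simp
qed

end

theorem mainTheorem1:
  fixes n \<nu> T :: real
    and u \<omega> \<psi> :: "real \<Rightarrow> real \<Rightarrow> real \<Rightarrow> real"
  assumes n: "n \<ge> 2" and nu: "\<nu> \<ge> 0" and T: "T > 0"
    and smooth: "smooth_on ({0<..<T} \<times> UNIV \<times> UNIV) (unc u)"
                "smooth_on ({0<..<T} \<times> UNIV \<times> UNIV) (unc \<omega>)"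
                "smooth_on ({0<..<T} \<times> UNIV \<times> UNIV) (unc \<psi>)"
    and even: "\<And>t r z. u t (-r) z = u t r z"
              "\<And>t r z. \<omega> t (-r) z = \<omega> t r z"
              "\<And>t r z. \<psi> t (-r) z = \<psi> t r z"
    and decay: "rapid_decay {0<..<T} u" "rapid_decay {0<..<T} \<omega>" "rapid_decay {0<..<T} \<psi>"
    and eq_u: "\<And>t r z. 0 < t \<Longrightarrow> t < T \<Longrightarrow> 0 < r \<Longrightarrow>
        dt u t r z + (- r * dz \<psi> t r z) * dr u t r z
          + ((n - 1) * \<psi> t r z + r * dr \<psi> t r z) * dz u t r z
        = 2 * u t r z * dz \<psi> t r z + \<nu> * lapn n u t r z"
    and eq_\<omega>: "\<And>t r z. 0 < t \<Longrightarrow> t < T \<Longrightarrow> 0 < r \<Longrightarrow>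
        dt \<omega> t r z + (- r * dz \<psi> t r z) * dr \<omega> t r z
          + ((n - 1) * \<psi> t r z + r * dr \<psi> t r z) * dz \<omega> t r z
        = dz (\<lambda>t r z. (u t r z)\<^sup>2) t r z - (n - 3) * dz \<psi> t r z * \<omega> t r z
          + \<nu> * lapn n \<omega> t r z"
    and eq_\<psi>: "\<And>t r z. 0 < t \<Longrightarrow> t < T \<Longrightarrow> 0 < r \<Longrightarrow>
        - lapn n \<psi> t r z = \<omega> t r z"
  shows "(\<forall>t\<in>{0<..<T}.
           ((\<lambda>s. (1/2) * wint n (\<lambda>r z. (u s r z)\<^sup>2 + (dr \<psi> s r z)\<^sup>2 + (dz \<psi> s r z)\<^sup>2))
              has_real_derivative
              (- \<nu> * wint n (\<lambda>r z. (dr u t r z)\<^sup>2 + (dz u t r z)\<^sup>2 + (lapn n \<psi> t r z)\<^sup>2)))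
           (at t))
       \<and> (\<nu> = 0 \<longrightarrow> (\<forall>s\<in>{0<..<T}. \<forall>t\<in>{0<..<T}.
             wint n (\<lambda>r z. (u s r z)\<^sup>2 + (dr \<psi> s r z)\<^sup>2 + (dz \<psi> s r z)\<^sup>2)
           = wint n (\<lambda>r z. (u t r z)\<^sup>2 + (dr \<psi> t r z)\<^sup>2 + (dz \<psi> t r z)\<^sup>2)))
       \<and> (\<nu> > 0 \<longrightarrow> (\<forall>s\<in>{0<..<T}. \<forall>t\<in>{0<..<T}. s \<le> t \<longrightarrow>
             wint n (\<lambda>r z. (u t r z)\<^sup>2 + (dr \<psi> t r z)\<^sup>2 + (dz \<psi> t r z)\<^sup>2)
           \<le> wint n (\<lambda>r z. (u s r z)\<^sup>2 + (dr \<psi> s r z)\<^sup>2 + (dz \<psi> s r z)\<^sup>2)))"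
proof -
  interpret axisymmetric_navier_stokes n \<nu> T u \<omega> \<psi>
    using n nu smooth decay eq_u eq_\<omega> eq_\<psi> by unfold_locales
  have "\<forall>t\<in>{0<..<T}. ((\<lambda>s. (1/2) * energy s) has_real_derivative - \<nu> * dissipation t) (at t)"
    using energy_has_derivative by simp
  moreover have "\<nu> = 0 \<longrightarrow> (\<forall>s\<in>{0<..<T}. \<forall>t\<in>{0<..<T}. energy s = energy t)"
    using energy_constant by blast
  moreover have "\<nu> > 0 \<longrightarrow> (\<forall>s\<in>{0<..<T}. \<forall>t\<in>{0<..<T}. s \<le> t \<longrightarrow> energy t \<le> energy s)"
    using energy_antimono by blast
  ultimately show ?thesis
    unfolding energy_def dissipation_def by blast
qed

end
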